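(* Let $\Phi$ be an irreducible reduced root system with Weyl group $W$, basis $\Delta$, highest root $\tilde\alpha$, and let $\tilde I$, $X_{\tilde I}$, $x_\alpha$, $L$, $\preceq$, $\xrightarrow{\gamma}$ be as in the context. Then the map $X_{\tilde I}\to\Phi_{\mathrm{lg}}$, $x\mapsto x(\tilde\alpha)$, is a bijection which is an anti-isomorphism of posets between $(\Phi_{\mathrm{lg}},\preceq)$ and $(X_{\tilde I},\le)$ (Bruhat order), and a long root of level $i$ corresponds to an element of length $i$. For long roots $\alpha,\beta$ and a positive root $\gamma$, we have $\beta\xrightarrow{\gamma}\alpha$ if and only if $x_\beta\xrightarrow{\gamma}x_\alpha$. Moreover, in this situation the integer $\partial_{\alpha\beta}:=\langle\beta,\gamma^\vee\rangle$ is given as follows: (i) if $\beta\in\Delta_{\mathrm{lg}}$ and $\alpha\in-\Delta_{\mathrm{lg}}$, then $\partial_{\alpha\beta}=2$ if $\alpha=-\beta$, and $\partial_{\alpha\beta}=1$ if $\beta+(-\alpha)$ is a root; (ii) otherwise, $\partial_{\alpha\beta}=1$ if $\gamma$ is long and $\partial_{\alpha\beta}=r$ if $\gamma$ is short.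
   Context: $\Phi$ is an irreducible reduced root system in a real vector space $V$, with coroots $\alpha^\vee$, pairing $\langle\cdot,\cdot\rangle$, reflections $s_\alpha$, Weyl group $W$. Fix a $W$-invariant scalar product $(\cdot|\cdot)$ with $\min_{\alpha\in\Phi}(\alpha|\alpha)=1$ and let $r=\max_{\alpha\in\Phi}(\alpha|\alpha)$; $\Phi_{\mathrm{lg}}=\{\alpha:(\alpha|\alpha)=r\}$ (long roots), short roots are the others; $\Delta_{\mathrm{lg}}=\Delta\cap\Phi_{\mathrm{lg}}$, $\Delta_{\mathrm{sh}}=\Delta\setminus\Delta_{\mathrm{lg}}$; $\Phi^+$ the positive roots; $l$ the length function for simple reflections $s_\alpha$, $\alpha\in\Delta$. $\tilde I=\{\alpha\in\Delta:(\tilde\alpha|\alpha)=0\}$, $\Phi_{\tilde I}^+$ the positive roots in the span of $\tilde I$, $X_{\tilde I}=\{w\in W:w(\Phi^+_{\tilde I})\subset\Phi^+\}$, and for $\alpha\in\Phi_{\mathrm{lg}}$, $x_\alpha$ is the unique element of $X_{\tilde I}$ with $x_\alpha(\tilde\alpha)=\alpha$. For a long root $\gamma=\sum_{\alpha\in\Delta}n_\alpha\alpha$, $\mathrm{ht}^\vee(\gamma)=\sum_{\alpha\in\Delta_{\mathrm{lg}}}n_\alpha+\frac1r\sum_{\alpha\in\Delta_{\mathrm{sh}}}n_\alpha$. Level: $L(\alpha)=\mathrm{ht}^\vee(\tilde\alpha)-\mathrm{ht}^\vee(\alpha)$ if $\alpha>0$, $L(\alpha)=\mathrm{ht}^\vee(\tilde\alpha)-\mathrm{ht}^\vee(\alpha)-1$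 if $\alpha<0$. For long roots $\alpha,\beta$ and $\gamma\in\Phi^+$: $\beta\xrightarrow{\gamma}\alpha$ means $\alpha=s_\gamma(\beta)$ and $L(\alpha)=L(\beta)+1$. A path from $\beta$ to $\alpha$ is a sequence of long roots $\beta=\beta_0\xrightarrow{\gamma_1}\beta_1\xrightarrow{\gamma_2}\cdots\xrightarrow{\gamma_k}\beta_k=\alpha$ with $\gamma_i\in\Phi^+$; $\alpha\preceq\beta$ means there is a path from $\beta$ to $\alpha$. For $w,w'\in W$ and $\gamma\in\Phi^+$, $w\xrightarrow{\gamma}w'$ means $w'=s_\gamma w$ and $l(w')=l(w)+1$; the Bruhat order $\le$ is the reflexive transitive closure of these relations, restricted to $X_{\tilde I}$. *)

theory Defs
  imports "HOL-Analysis.Analysis"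
begin

text \<open>The inner product
of the ambient euclidean space plays the role of the W-invariant scalar product
(the reflections below are orthogonal reflections for it). Only ratios of squared
lengths enter, so the normalisation min (a|a) = 1 is encoded via ratios.\<close>

definition refl :: "'v::real_inner \<Rightarrow> 'v \<Rightarrow> 'v" where
  "refl a x = x - (2 * (x \<bullet> a) / (a \<bullet> a)) *\<^sub>R a"

definition pairing :: "'v::real_inner \<Rightarrow> 'v \<Rightarrow> real" where
  "pairing b a = 2 * (b \<bullet> a) / (a \<bullet> a)"

definition root_system :: "'v::euclidean_space set \<Rightarrow> bool" where
  "root_system \<Phi> \<longleftrightarrow> finite \<Phi> \<and> 0 \<notin> \<Phi> \<and> span \<Phi> = UNIV \<and>
     (\<forall>a\<in>\<Phi>. refl a ` \<Phi> = \<Phi>) \<and> (\<forall>a\<in>\<Phi>. \<forall>b\<in>\<Phi>. pairing b a \<in> \<int>)"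

definition reduced_rs :: "'v::euclidean_space set \<Rightarrow> bool" where
  "reduced_rs \<Phi> \<longleftrightarrow> (\<forall>a\<in>\<Phi>. \<forall>c::real. c *\<^sub>R a \<in> \<Phi> \<longrightarrow> c = 1 \<or> c = -1)"

definition irreducible_rs :: "'v::euclidean_space set \<Rightarrow> bool" where
  "irreducible_rs \<Phi> \<longleftrightarrow> \<not> (\<exists>A B. A \<noteq> {} \<and> B \<noteq> {} \<and> A \<union> B = \<Phi> \<and> A \<inter> B = {} \<and>
      (\<forall>a\<in>A. \<forall>b\<in>B. a \<bullet> b = 0))"

definition coeff :: "'v::euclidean_space set \<Rightarrow> 'v \<Rightarrow> 'v \<Rightarrow> real" where
  "coeff \<Delta> v a = representation \<Delta> v a"

definition is_root_basis :: "'v::euclidean_space set \<Rightarrow> 'v set \<Rightarrow> bool" where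
  "is_root_basis \<Phi> \<Delta> \<longleftrightarrow> \<Delta> \<subseteq> \<Phi> \<and> independent \<Delta> \<and> span \<Delta> = UNIV \<and>
     (\<forall>b\<in>\<Phi>. (\<forall>a\<in>\<Delta>. coeff \<Delta> b a \<in> \<int>) \<and>
        ((\<forall>a\<in>\<Delta>. coeff \<Delta> b a \<ge> 0) \<or> (\<forall>a\<in>\<Delta>. coeff \<Delta> b a \<le> 0)))"

definition pos_roots :: "'v::euclidean_space set \<Rightarrow> 'v set \<Rightarrow> 'v set" where
  "pos_roots \<Phi> \<Delta> = {b\<in>\<Phi>. \<forall>a\<in>\<Delta>. coeff \<Delta> b a \<ge> 0}"

definition is_highest_root :: "'v::euclidean_space set \<Rightarrow> 'v set \<Rightarrow> 'v \<Rightarrow> bool" where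
  "is_highest_root \<Phi> \<Delta> h \<longleftrightarrow> h \<in> \<Phi> \<and> (\<forall>b\<in>\<Phi>. \<forall>a\<in>\<Delta>. coeff \<Delta> (h - b) a \<ge> 0)"

inductive_set weyl :: "'v::euclidean_space set \<Rightarrow> ('v \<Rightarrow> 'v) set" for \<Phi> where
  weyl_id: "id \<in> weyl \<Phi>"
| weyl_step: "a \<in> \<Phi> \<Longrightarrow> w \<in> weyl \<Phi> \<Longrightarrow> refl a \<circ> w \<in> weyl \<Phi>"

definition wlen :: "'v::euclidean_space set \<Rightarrow> ('v \<Rightarrow> 'v) \<Rightarrow> nat" where
  "wlen \<Delta> w = (LEAST n. \<exists>as. set as \<subseteq> \<Delta> \<and> length as = n \<and>
                             w = foldr (\<lambda>a f. refl a \<circ> f) as id)"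

definition sqmax :: "'v::euclidean_space set \<Rightarrow> real" where
  "sqmax \<Phi> = Max ((\<lambda>a. a \<bullet> a) ` \<Phi>)"

definition sqmin :: "'v::euclidean_space set \<Rightarrow> real" where
  "sqmin \<Phi> = Min ((\<lambda>a. a \<bullet> a) ` \<Phi>)"

text \<open>r = max (a|a) when min (a|a) = 1\<close>
definition rr :: "'v::euclidean_space set \<Rightarrow> real" where
  "rr \<Phi> = sqmax \<Phi> / sqmin \<Phi>"

definition long_roots :: "'v::euclidean_space set \<Rightarrow> 'v set" where
  "long_roots \<Phi> = {a\<in>\<Phi>. a \<bullet> a = sqmax \<Phi>}"

definition htv :: "'v::euclidean_space set \<Rightarrow> 'v set \<Rightarrow> 'v \<Rightarrow> real" where
  "htv \<Phi> \<Delta> g = (\<Sum>a\<in>\<Delta> \<inter> long_roots \<Phi>. coeff \<Delta> g a)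
                 + (1 / rr \<Phi>) * (\<Sum>a\<in>\<Delta> - long_roots \<Phi>. coeff \<Delta> g a)"

definition level :: "'v::euclidean_space set \<Rightarrow> 'v set \<Rightarrow> 'v \<Rightarrow> 'v \<Rightarrow> real" where
  "level \<Phi> \<Delta> h a = (if a \<in> pos_roots \<Phi> \<Delta> then htv \<Phi> \<Delta> h - htv \<Phi> \<Delta> a
                      else htv \<Phi> \<Delta> h - htv \<Phi> \<Delta> a - 1)"

definition Itil :: "'v::euclidean_space set \<Rightarrow> 'v \<Rightarrow> 'v set" where
  "Itil \<Delta> h = {a\<in>\<Delta>. h \<bullet> a = 0}"

definition XI :: "'v::euclidean_space set \<Rightarrow> 'v set \<Rightarrow> 'v \<Rightarrow> ('v \<Rightarrow> 'v) set" where
  "XI \<Phi> \<Delta> h = {w\<in>weyl \<Phi>. w ` {b\<in>pos_roots \<Phi> \<Delta>. b \<in> span (Itil \<Delta> h)} \<subseteq> pos_roots \<Phi> \<Delta>}"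

definition xroot :: "'v::euclidean_space set \<Rightarrow> 'v set \<Rightarrow> 'v \<Rightarrow> 'v \<Rightarrow> ('v \<Rightarrow> 'v)" where
  "xroot \<Phi> \<Delta> h a = (THE w. w \<in> XI \<Phi> \<Delta> h \<and> w h = a)"

definition root_edge :: "'v::euclidean_space set \<Rightarrow> 'v set \<Rightarrow> 'v \<Rightarrow> 'v \<Rightarrow> 'v \<Rightarrow> 'v \<Rightarrow> bool" where
  "root_edge \<Phi> \<Delta> h b g a \<longleftrightarrow> a = refl g b \<and> level \<Phi> \<Delta> h a = level \<Phi> \<Delta> h b + 1"

text \<open>root_le a b: a \<preceq> b, i.e. there is a path from b to a through long roots\<close>
definition root_le :: "'v::euclidean_space set \<Rightarrow> 'v set \<Rightarrow> 'v \<Rightarrow> 'v \<Rightarrow> 'v \<Rightarrow> bool" where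
  "root_le \<Phi> \<Delta> h a b \<longleftrightarrow>
     (\<lambda>b' a'. b' \<in> long_roots \<Phi> \<and> a' \<in> long_roots \<Phi> \<and>
              (\<exists>g\<in>pos_roots \<Phi> \<Delta>. root_edge \<Phi> \<Delta> h b' g a'))\<^sup>*\<^sup>* b a"

definition weyl_edge :: "'v::euclidean_space set \<Rightarrow> ('v \<Rightarrow> 'v) \<Rightarrow> 'v \<Rightarrow> ('v \<Rightarrow> 'v) \<Rightarrow> bool" where
  "weyl_edge \<Delta> w g w' \<longleftrightarrow> w' = refl g \<circ> w \<and> wlen \<Delta> w' = wlen \<Delta> w + 1"

definition bruhat_le :: "'v::euclidean_space set \<Rightarrow> 'v set \<Rightarrow> 'v \<Rightarrow> ('v \<Rightarrow> 'v) \<Rightarrow> ('v \<Rightarrow> 'v) \<Rightarrow> bool" where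
  "bruhat_le \<Phi> \<Delta> h w w' \<longleftrightarrow> w \<in> XI \<Phi> \<Delta> h \<and> w' \<in> XI \<Phi> \<Delta> h \<and>
     (\<lambda>u u'. \<exists>g\<in>pos_roots \<Phi> \<Delta>. weyl_edge \<Delta> u g u')\<^sup>*\<^sup>* w w'"

end

theory Submission
  imports Defs
begin

text \<open>
  The Weyl group acts transitively on roots of equal length (irreducibility), so the long
  roots are exactly the orbit of the highest root h. For a root a let N(a) (\<open>neg_count\<close>)
  count the positive roots e with (e|a) < 0. A simple reflection s changes N(b) and the level
  of a long root b by the same amount sgn (s|b), and both vanish at h, so the level of a long
  root is N(a). For x in X_I the left inversions of x are the positive roots e with
  (e|x h) < 0: hence l(x) = N(x h), x is determined by x h, and a minimal-length w with
  w h = a lies in X_I.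

  For g > 0 the difference N(s_g b) - N(b) is a sum over the inversion set of s_g, which
  splits into the pairs {e, -s_g e}. If (g|b) > 0, the pair {g} contributes 2 and every other
  pair contributes at least 0; an edge b -g-> a therefore forces all other contributions to
  vanish. This gives s_g x_b in X_I with l(s_g x_b) = l(x_b) + 1, and the values of the
  pairing. Conversely, if (g|b) > 0 then b and s_g b are joined by a path of edges, by
  induction on N(s_g b): conjugate with a simple reflection s with (s|s_g b) < 0 and fold
  paths along the wall of s.
\<close>

section \<open>Reflections\<close>

lemma refl_add: "refl a (x + y) = refl a x + refl a y"
  unfolding refl_def by (simp add: inner_add_left add_divide_distrib scaleR_add_left algebra_simps)

lemma refl_scale: "refl a (c *\<^sub>R x) = c *\<^sub>R refl a x"
  unfolding refl_def by (simp add: algebra_simps scaleR_2)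

lemma refl_neg: "refl a (- x) = - refl a x"
  using refl_scale[of a "-1" x] by simp

lemma refl_diff: "refl a (x - y) = refl a x - refl a y"
  using refl_add[of a x "-y"] refl_neg[of a y] by simp

lemma linear_refl: "linear (refl a)"
  by (rule linearI) (simp_all add: refl_add refl_scale)

lemma refl_inner: "a \<noteq> 0 \<Longrightarrow> refl a x \<bullet> refl a y = x \<bullet> y"
  unfolding refl_def by (simp add: inner_diff_left inner_diff_right field_simps inner_commute)

lemma refl_refl: "a \<noteq> 0 \<Longrightarrow> refl a (refl a x) = x"
  unfolding refl_def by (simp add: inner_diff_left field_simps algebra_simps)

lemma refl_self: "a \<noteq> 0 \<Longrightarrow> refl a a = - a"
  unfolding refl_def by (simp add: algebra_simps scaleR_2)

lemma refl_orth: "x \<bullet> a = 0 \<Longrightarrow> refl a x = x"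
  unfolding refl_def by simp

lemma refl_scaled: "c \<noteq> 0 \<Longrightarrow> refl (c *\<^sub>R a) = refl a"
  unfolding refl_def by (rule ext) (simp add: field_simps)

lemma refl_uminus: "refl (- a) = refl a"
  using refl_scaled[of "-1" a] by simp

lemma refl_pairing: "refl a x = x - pairing x a *\<^sub>R a"
  unfolding refl_def pairing_def by simp

lemma inner_refl_left: "a \<noteq> 0 \<Longrightarrow> refl a x \<bullet> y = x \<bullet> refl a y"
  using refl_inner[of a x "refl a y"] by (simp add: refl_refl)

lemma pairing_self: "a \<noteq> 0 \<Longrightarrow> pairing a a = 2"
  unfolding pairing_def by simp

lemma conj_refl:
  assumes "linear u" and "\<And>x y. u x \<bullet> u y = x \<bullet> y"
  shows "refl (u a) (u x) = u (refl a x)"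
proof -
  have "u (refl a x) = u x - (2 * (x \<bullet> a) / (a \<bullet> a)) *\<^sub>R u a"
    unfolding refl_def using assms(1) by (simp add: linear_diff linear_scale)
  then show ?thesis unfolding refl_def using assms(2) by simp
qed

lemma mem_subspace_if_refl_stable:
  fixes U :: "'a::real_inner set"
  assumes U: "subspace U" "refl c ` U \<subseteq> U" and u: "u \<in> U" "u \<bullet> c \<noteq> 0"
  shows "c \<in> U"
proof -
  have "u - refl c u \<in> U" using U u by (blast intro: subspace_diff)
  then have "pairing u c *\<^sub>R c \<in> U" by (simp add: refl_pairing)
  moreover have "pairing u c \<noteq> 0" using u(2) unfolding pairing_def by auto
  ultimately show ?thesis using subspace_scale[OF U(1), of "pairing u c *\<^sub>R c" "1 / pairing u c"] by simp
qed

definition refl_prod :: "'v::real_inner list \<Rightarrow> 'v \<Rightarrow> 'v" where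
  "refl_prod as = foldr (\<lambda>a f. refl a \<circ> f) as id"

lemma refl_prod_Nil[simp]: "refl_prod [] = id" by (simp add: refl_prod_def)
lemma refl_prod_Cons[simp]: "refl_prod (a # as) = refl a \<circ> refl_prod as" by (simp add: refl_prod_def)
lemma refl_prod_append: "refl_prod (as @ bs) = refl_prod as \<circ> refl_prod bs"
  by (induction as) (auto simp: refl_prod_def)

lemma linear_refl_prod: "linear (refl_prod as)"
proof (induction as)
  case Nil then show ?case using linear_id by (simp add: id_def)
next
  case (Cons a as) then show ?case using linear_compose[OF Cons.IH linear_refl] by (simp add: o_def)
qed

section \<open>Root systems with a basis\<close>

locale irreducible_root_system =
  fixes R :: "'v::euclidean_space set" and D :: "'v set" and h :: 'v
  assumes rsys: "root_system R" and red: "reduced_rs R" and irr: "irreducible_rs R"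
    and base: "is_root_basis R D" and hr: "is_highest_root R D h"
begin

abbreviation P where "P \<equiv> pos_roots R D"

lemma finR: "finite R" using rsys unfolding root_system_def by auto
lemma zeroR: "0 \<notin> R" using rsys unfolding root_system_def by auto
lemma nz: "a \<in> R \<Longrightarrow> a \<noteq> 0" using zeroR by auto
lemma refl_closed: "a \<in> R \<Longrightarrow> x \<in> R \<Longrightarrow> refl a x \<in> R"
  using rsys unfolding root_system_def by blast
lemma pairing_int: "a \<in> R \<Longrightarrow> b \<in> R \<Longrightarrow> pairing b a \<in> \<int>"
  using rsys unfolding root_system_def by blast
lemma neg_closed: "a \<in> R \<Longrightarrow> - a \<in> R"
  using refl_closed[of a a] refl_self[of a] nz by auto

lemma DR: "D \<subseteq> R" using base unfolding is_root_basis_def by auto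
lemma indepD: "independent D" using base unfolding is_root_basis_def by auto
lemma spanD: "span D = UNIV" using base unfolding is_root_basis_def by auto
lemma finD: "finite D" using DR finR finite_subset by auto
lemma coeff_intg: "b \<in> R \<Longrightarrow> a \<in> D \<Longrightarrow> coeff D b a \<in> \<int>"
  using base unfolding is_root_basis_def by auto
lemma coherent: "b \<in> R \<Longrightarrow> (\<forall>a\<in>D. coeff D b a \<ge> 0) \<or> (\<forall>a\<in>D. coeff D b a \<le> 0)"
  using base unfolding is_root_basis_def by auto

lemma coeff_add: "coeff D (x + y) a = coeff D x a + coeff D y a"
  unfolding coeff_def using real_vector.representation_add[OF indepD, of y x] spanD by auto
lemma coeff_neg: "coeff D (- x) a = - coeff D x a"
  unfolding coeff_def using real_vector.representation_neg[OF indepD, of x] spanD by auto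
lemma coeff_diff: "coeff D (x - y) a = coeff D x a - coeff D y a"
  unfolding coeff_def using real_vector.representation_diff[OF indepD, of y x] spanD by auto
lemma coeff_scale: "coeff D (c *\<^sub>R x) a = c * coeff D x a"
  unfolding coeff_def using real_vector.representation_scale[OF indepD, of x c] spanD by auto
lemma coeff_zero: "coeff D 0 a = 0"
  unfolding coeff_def by (simp add: real_vector.representation_zero)
lemma coeff_simple: "s \<in> D \<Longrightarrow> coeff D s a = (if a = s then 1 else 0)"
  unfolding coeff_def using real_vector.representation_basis[OF indepD] by auto
lemma sum_coeff: "(\<Sum>a\<in>D. coeff D x a *\<^sub>R a) = x"
  unfolding coeff_def using real_vector.sum_representation_eq[OF indepD, of x D] spanD finD by auto
lemma coeff_sum: "finite I \<Longrightarrow> coeff D (\<Sum>i\<in>I. f i) a = (\<Sum>i\<in>I. coeff D (f i) a)"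
  by (induction I rule: finite_induct) (auto simp: coeff_zero coeff_add)

lemma inner_expand: "x \<bullet> y = (\<Sum>a\<in>D. coeff D x a * (a \<bullet> y))"
proof -
  have "x \<bullet> y = (\<Sum>a\<in>D. coeff D x a *\<^sub>R a) \<bullet> y" using sum_coeff by simp
  also have "\<dots> = (\<Sum>a\<in>D. coeff D x a * (a \<bullet> y))" by (simp add: inner_sum_left)
  finally show ?thesis .
qed

lemma coeff_eq_imp_eq: "(\<And>a. a \<in> D \<Longrightarrow> coeff D x a = coeff D y a) \<Longrightarrow> x = y"
  using sum_coeff[of x] sum_coeff[of y] by (metis (no_types, lifting) sum.cong)

lemma nonzero_coeff: "x \<noteq> 0 \<Longrightarrow> \<exists>a\<in>D. coeff D x a \<noteq> 0"
  using coeff_eq_imp_eq[of x 0] coeff_zero by auto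

lemma pos_iff: "b \<in> P \<longleftrightarrow> b \<in> R \<and> (\<forall>a\<in>D. coeff D b a \<ge> 0)"
  unfolding pos_roots_def by auto

lemma pos_or_neg: "b \<in> R \<Longrightarrow> b \<in> P \<or> - b \<in> P"
  using coherent[of b] neg_closed[of b] by (auto simp: pos_iff coeff_neg)

lemma not_pos_neg: "b \<in> P \<Longrightarrow> - b \<notin> P"
proof
  assume b: "b \<in> P" and nb: "- b \<in> P"
  then have "b \<noteq> 0" using zeroR pos_iff by auto
  then obtain a where "a \<in> D" "coeff D b a \<noteq> 0" using nonzero_coeff by auto
  with b nb show False by (auto simp: pos_iff coeff_neg) (metis order.antisym)
qed

lemma neg_iff: "b \<in> R \<Longrightarrow> b \<notin> P \<longleftrightarrow> - b \<in> P"
  using pos_or_neg not_pos_neg by force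

lemma pos_if_coeff: "b \<in> R \<Longrightarrow> a \<in> D \<Longrightarrow> coeff D b a > 0 \<Longrightarrow> b \<in> P"
  using coherent[of b] by (auto simp: pos_iff)

lemma PR: "P \<subseteq> R" unfolding pos_roots_def by auto
lemma finP: "finite P" using PR finR finite_subset by auto

lemma simple_pos: "s \<in> D \<Longrightarrow> s \<in> P"
  using DR by (auto simp: pos_iff coeff_simple)

lemma reduced: "a \<in> R \<Longrightarrow> c *\<^sub>R a \<in> R \<Longrightarrow> c = 1 \<or> c = -1"
  using red unfolding reduced_rs_def by blast

lemma simple_refl_pos:
  assumes s: "s \<in> D" and b: "b \<in> P" and ne: "b \<noteq> s"
  shows "refl s b \<in> P"
proof -
  have bR: "b \<in> R" and sR: "s \<in> R" using b DR s PR by auto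
  have "\<exists>t\<in>D. t \<noteq> s \<and> coeff D b t \<noteq> 0"
  proof (rule ccontr)
    assume "\<not> ?thesis"
    then have "b = coeff D b s *\<^sub>R s"
      by (intro coeff_eq_imp_eq) (auto simp: coeff_scale coeff_simple s)
    then have "coeff D b s = 1 \<or> coeff D b s = -1" using reduced[OF sR] bR by metis
    moreover have "coeff D b s \<ge> 0" using b s by (auto simp: pos_iff)
    ultimately have "b = s" using \<open>b = _\<close> by auto
    with ne show False by simp
  qed
  then obtain t where t: "t \<in> D" "t \<noteq> s" "coeff D b t \<noteq> 0" by auto
  then have "coeff D b t > 0" using b by (force simp: pos_iff)
  moreover have "coeff D (refl s b) t = coeff D b t"
    by (simp add: refl_pairing coeff_diff coeff_scale coeff_simple s t)
  ultimately show ?thesis using pos_if_coeff[OF refl_closed[OF sR bR] t(1)] by simp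
qed

section \<open>Words in simple reflections\<close>

lemma weyl_comp: "w \<in> weyl R \<Longrightarrow> v \<in> weyl R \<Longrightarrow> w \<circ> v \<in> weyl R"
  by (induction w rule: weyl.induct) (auto simp: o_assoc[symmetric] intro: weyl.intros)

lemma weyl_refl: "a \<in> R \<Longrightarrow> refl a \<in> weyl R"
  using weyl_step[OF _ weyl_id] by auto

lemma refl_prod_weyl: "set as \<subseteq> R \<Longrightarrow> refl_prod as \<in> weyl R"
  by (induction as) (auto intro: weyl.intros)

lemma refl_prod_inner: "set as \<subseteq> R \<Longrightarrow> refl_prod as x \<bullet> refl_prod as y = x \<bullet> y"
  by (induction as arbitrary: x y) (auto simp: refl_inner nz)

lemma refl_prod_rev: "set as \<subseteq> R \<Longrightarrow> refl_prod (rev as) (refl_prod as x) = x"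
  by (induction as arbitrary: x) (auto simp: refl_prod_append refl_refl nz)

lemma refl_prod_rev2: "set as \<subseteq> R \<Longrightarrow> refl_prod as (refl_prod (rev as) x) = x"
  using refl_prod_rev[of "rev as"] by simp

lemma refl_prod_R: "set as \<subseteq> R \<Longrightarrow> x \<in> R \<Longrightarrow> refl_prod as x \<in> R"
  by (induction as) (auto intro: refl_closed)

lemma refl_conj_refl_prod:
  assumes "set as \<subseteq> R"
  shows "refl (refl_prod as s) = refl_prod (as @ [s] @ rev as)"
proof
  fix x
  have "refl (refl_prod as s) x = refl (refl_prod as s) (refl_prod as (refl_prod (rev as) x))"
    using refl_prod_rev2[OF assms] by simp
  also have "\<dots> = refl_prod as (refl s (refl_prod (rev as) x))"
    by (rule conj_refl[OF linear_refl_prod refl_prod_inner[OF assms]])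
  also have "\<dots> = refl_prod (as @ [s] @ rev as) x" by (simp add: refl_prod_append)
  finally show "refl (refl_prod as s) x = refl_prod (as @ [s] @ rev as) x" .
qed

definition ht :: "'v \<Rightarrow> real" where "ht x = (\<Sum>a\<in>D. coeff D x a)"

lemma ht_diff: "ht (x - y) = ht x - ht y"
  by (simp add: ht_def coeff_diff sum_subtractf)
lemma ht_scale: "ht (c *\<^sub>R x) = c * ht x"
  by (simp add: ht_def coeff_scale sum_distrib_left)
lemma ht_simple: "s \<in> D \<Longrightarrow> ht s = 1"
  by (simp add: ht_def coeff_simple finD)

lemma ht_int: "b \<in> R \<Longrightarrow> ht b \<in> \<int>"
  unfolding ht_def using coeff_intg by (auto intro: Ints_sum)

lemma ht_pos: "b \<in> P \<Longrightarrow> ht b \<ge> 1"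
proof -
  assume b: "b \<in> P"
  then have "b \<noteq> 0" using zeroR PR by auto
  then obtain a where a: "a \<in> D" "coeff D b a \<noteq> 0" using nonzero_coeff by auto
  moreover have "coeff D b a \<ge> 0" using b a by (auto simp: pos_iff)
  moreover obtain k where "coeff D b a = of_int k" using coeff_intg[of b a] b a PR Ints_cases by blast
  ultimately have "coeff D b a \<ge> 1" by simp
  moreover have "ht b = coeff D b a + (\<Sum>c\<in>D-{a}. coeff D b c)"
    unfolding ht_def using a finD by (simp add: sum.remove)
  moreover have "(\<Sum>c\<in>D-{a}. coeff D b c) \<ge> 0" using b by (auto simp: pos_iff intro: sum_nonneg)
  ultimately show ?thesis by linarith
qed

lemma pos_inner_pos: "b \<in> P \<Longrightarrow> \<exists>a\<in>D. a \<bullet> b > 0"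
proof (rule ccontr)
  assume b: "b \<in> P" and "\<not> (\<exists>a\<in>D. a \<bullet> b > 0)"
  then have "\<forall>a\<in>D. coeff D b a * (a \<bullet> b) \<le> 0"
    by (auto simp: pos_iff mult_nonneg_nonpos)
  then have "(\<Sum>a\<in>D. coeff D b a * (a \<bullet> b)) \<le> 0" by (intro sum_nonpos) auto
  then have "b \<bullet> b \<le> 0" using inner_expand[of b b] by simp
  moreover have "b \<noteq> 0" using b PR zeroR by auto
  ultimately show False using inner_gt_zero_iff[of b] by linarith
qed

lemma pairing_pos_ge1: "a \<in> R \<Longrightarrow> b \<in> R \<Longrightarrow> b \<bullet> a > 0 \<Longrightarrow> pairing b a \<ge> 1"
proof -
  assume a: "a \<in> R" and b: "b \<in> R" and p: "b \<bullet> a > 0"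
  have "pairing b a > 0" unfolding pairing_def using p nz[OF a] by (simp add: divide_pos_pos)
  moreover obtain k where "pairing b a = of_int k" using pairing_int[OF a b] Ints_cases by auto
  ultimately show ?thesis by simp
qed

lemma pos_root_word: "b \<in> P \<Longrightarrow> \<exists>as s. set as \<subseteq> D \<and> s \<in> D \<and> b = refl_prod as s"
proof (induction "nat (floor (ht b))" arbitrary: b rule: less_induct)
  case less
  show ?case
  proof (cases "b \<in> D")
    case True then show ?thesis by (intro exI[of _ "[]"] exI[of _ b]) auto
  next
    case False
    obtain a where a: "a \<in> D" "a \<bullet> b > 0" using pos_inner_pos[OF less.prems] by auto
    have aR: "a \<in> R" using a DR by auto
    have bR: "b \<in> R" using less.prems PR by auto
    have ne: "b \<noteq> a" using False a by auto
    define b' where "b' = refl a b"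
    have b': "b' \<in> P" unfolding b'_def using simple_refl_pos[OF a(1) less.prems ne] .
    have "pairing b a \<ge> 1" using pairing_pos_ge1[OF aR bR] a by (simp add: inner_commute)
    moreover have "ht b' = ht b - pairing b a"
      unfolding b'_def refl_pairing by (simp add: ht_diff ht_scale ht_simple a)
    moreover have "ht b' \<ge> 1" by (rule ht_pos[OF b'])
    moreover have "ht b \<in> \<int>" "ht b' \<in> \<int>" using bR b' PR ht_int by auto
    ultimately have "nat (floor (ht b')) < nat (floor (ht b))"
    proof -
      assume h1: "pairing b a \<ge> 1" and h2: "ht b' = ht b - pairing b a" and h3: "ht b' \<ge> 1"
        and h4: "ht b \<in> \<int>" "ht b' \<in> \<int>"
      obtain m where m: "ht b = of_int m" using h4 Ints_cases by blast
      obtain k where k: "ht b' = of_int k" using h4 Ints_cases by blast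
      have "k \<ge> 1" "k < m" using h1 h2 h3 m k by linarith+
      then show ?thesis using m k by simp
    qed
    then obtain as s where IH: "set as \<subseteq> D" "s \<in> D" "b' = refl_prod as s" using less.hyps[OF _ b'] by blast
    have "b = refl a b'" unfolding b'_def using refl_refl[OF nz[OF aR]] by simp
    then have "b = refl_prod (a # as) s" using IH by simp
    then show ?thesis using IH a by (intro exI[of _ "a # as"] exI[of _ s]) auto
  qed
qed

lemma refl_word: "b \<in> R \<Longrightarrow> \<exists>as. set as \<subseteq> D \<and> refl b = refl_prod as"
proof -
  assume bR: "b \<in> R"
  obtain c where c: "c \<in> P" "refl b = refl c"
    using pos_or_neg[OF bR] refl_uminus[of b] by (metis minus_minus)
  obtain as s where w: "set as \<subseteq> D" "s \<in> D" "c = refl_prod as s" using pos_root_word[OF c(1)] by blast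
  have "refl c = refl_prod (as @ [s] @ rev as)" using refl_conj_refl_prod[of as s] w DR by auto
  then show ?thesis using c w by (intro exI[of _ "as @ [s] @ rev as"]) auto
qed

lemma weyl_word: "w \<in> weyl R \<Longrightarrow> \<exists>as. set as \<subseteq> D \<and> w = refl_prod as"
proof (induction w rule: weyl.induct)
  case weyl_id then show ?case by (intro exI[of _ "[]"]) auto
next
  case (weyl_step a w)
  obtain as where "set as \<subseteq> D" "w = refl_prod as" using weyl_step.IH by blast
  moreover obtain bs where "set bs \<subseteq> D" "refl a = refl_prod bs" using refl_word[OF weyl_step.hyps(1)] by blast
  ultimately show ?case by (intro exI[of _ "bs @ as"]) (auto simp: refl_prod_append)
qed

lemma weyl_inner: "w \<in> weyl R \<Longrightarrow> w x \<bullet> w y = x \<bullet> y"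
  by (induction w arbitrary: x y rule: weyl.induct) (auto simp: refl_inner nz)

lemma weyl_linear: "w \<in> weyl R \<Longrightarrow> linear w"
proof (induction w rule: weyl.induct)
  case weyl_id then show ?case using linear_id by (simp add: id_def)
next
  case (weyl_step a w) then show ?case using linear_compose[OF weyl_step.IH linear_refl] by (simp add: o_def)
qed

lemma weyl_R: "w \<in> weyl R \<Longrightarrow> x \<in> R \<Longrightarrow> w x \<in> R"
  by (induction w rule: weyl.induct) (auto intro: refl_closed)

lemma weyl_inv: "w \<in> weyl R \<Longrightarrow> \<exists>v\<in>weyl R. (\<forall>x. v (w x) = x) \<and> (\<forall>x. w (v x) = x)"
proof -
  assume "w \<in> weyl R"
  then obtain as where as: "set as \<subseteq> D" "w = refl_prod as" using weyl_word by blast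
  then have "set as \<subseteq> R" using DR by auto
  then show ?thesis using as refl_prod_rev refl_prod_rev2 refl_prod_weyl[of "rev as"]
    by (intro bexI[of _ "refl_prod (rev as)"]) auto
qed

lemma weyl_surjR: "w \<in> weyl R \<Longrightarrow> y \<in> R \<Longrightarrow> \<exists>x\<in>R. w x = y"
proof -
  assume w: "w \<in> weyl R" and y: "y \<in> R"
  obtain v where v: "v \<in> weyl R" "\<forall>x. w (v x) = x" using weyl_inv[OF w] by blast
  show ?thesis using v weyl_R[OF v(1) y] by auto
qed

lemma weyl_inj: "w \<in> weyl R \<Longrightarrow> inj w"
  using weyl_inv by (metis injI)

lemma weyl_neg: "w \<in> weyl R \<Longrightarrow> w (- x) = - w x"
  using weyl_linear linear_neg by blast

section \<open>Inversions and length\<close>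

definition refl_inversions :: "'v \<Rightarrow> 'v set" where "refl_inversions g = {e\<in>P. refl g e \<notin> P}"

lemma refl_inversions_subset: "refl_inversions g \<subseteq> P" unfolding refl_inversions_def by auto
lemma finite_refl_inversions: "finite (refl_inversions g)" using finite_subset[OF refl_inversions_subset finP] .

lemma refl_noninversion:
  assumes g: "g \<in> R" and e: "e \<in> P - refl_inversions g" shows "refl g e \<in> P - refl_inversions g"
  using e refl_refl[OF nz[OF g]] unfolding refl_inversions_def by auto

lemma neg_refl_refl_inversions:
  assumes g: "g \<in> R" and e: "e \<in> refl_inversions g" shows "- refl g e \<in> refl_inversions g"
proof -
  have eR: "e \<in> R" using e refl_inversions_subset PR by auto
  have "refl g e \<in> R" using refl_closed[OF g eR] .
  then have "- refl g e \<in> P" using e neg_iff unfolding refl_inversions_def by auto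
  moreover have "refl g (- refl g e) = - e" using refl_refl[OF nz[OF g]] by (simp add: refl_neg)
  moreover have "- e \<notin> P" using e not_pos_neg refl_inversions_subset by auto
  ultimately show ?thesis unfolding refl_inversions_def by auto
qed

lemma refl_noninversion_pos: "g \<in> R \<Longrightarrow> e \<in> P \<Longrightarrow> e \<notin> refl_inversions g \<Longrightarrow> refl g e \<in> P"
  using refl_noninversion by blast
lemma refl_noninversion_not_inversion: "g \<in> R \<Longrightarrow> e \<in> P \<Longrightarrow> e \<notin> refl_inversions g \<Longrightarrow> refl g e \<notin> refl_inversions g"
  using refl_noninversion by blast

lemma bij_neg_refl_refl_inversions: "g \<in> R \<Longrightarrow> bij_betw (\<lambda>e. - refl g e) (refl_inversions g) (refl_inversions g)"
  by (rule bij_betw_byWitness[of _ "\<lambda>e. - refl g e"])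
     (auto simp: refl_refl nz refl_neg intro: neg_refl_refl_inversions)

text \<open>\<open>s\<^sub>g\<close> permutes the positive roots outside its inversion set, and
  \<open>e \<mapsto> -s\<^sub>g e\<close> permutes the inversion set.\<close>
lemma count_refl:
  assumes g: "g \<in> R"
  shows "card {e\<in>P. Q (refl g e)} + card {e\<in>refl_inversions g. Q e} = card {e\<in>P. Q e} + card {e\<in>refl_inversions g. Q (- e)}"
proof -
  have fin: "finite (P - refl_inversions g)" "finite (refl_inversions g)" using finP finite_refl_inversions by auto
  have split: "\<And>S. {e\<in>P. S e} = {e\<in>P - refl_inversions g. S e} \<union> {e\<in>refl_inversions g. S e}" using refl_inversions_subset by auto
  have disj: "\<And>S. {e\<in>P - refl_inversions g. S e} \<inter> {e\<in>refl_inversions g. S e} = {}" by auto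
  have c1: "\<And>S. card {e\<in>P. S e} = card {e\<in>P - refl_inversions g. S e} + card {e\<in>refl_inversions g. S e}"
    by (subst split, rule card_Un_disjoint) (use fin in auto)
  have "card {e\<in>P - refl_inversions g. Q (refl g e)} = card {e\<in>P - refl_inversions g. Q e}"
  proof (rule bij_betw_same_card[of "refl g"])
    show "bij_betw (refl g) {e \<in> P - refl_inversions g. Q (refl g e)} {e \<in> P - refl_inversions g. Q e}"
      by (rule bij_betw_byWitness[of _ "refl g"]) (auto simp: refl_refl nz g dest: refl_noninversion_pos[OF g] refl_noninversion_not_inversion[OF g])
  qed
  moreover have "card {e\<in>refl_inversions g. Q (refl g e)} = card {e\<in>refl_inversions g. Q (- e)}"
  proof (rule bij_betw_same_card[of "\<lambda>e. - refl g e"])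
    show "bij_betw (\<lambda>e. - refl g e) {e\<in>refl_inversions g. Q (refl g e)} {e\<in>refl_inversions g. Q (- e)}"
      by (rule bij_betw_byWitness[of _ "\<lambda>e. - refl g e"])
         (auto simp: refl_refl nz g refl_neg intro: neg_refl_refl_inversions[OF g])
  qed
  ultimately show ?thesis using c1[of "\<lambda>e. Q (refl g e)"] c1[of Q] by simp
qed

lemma refl_inversions_simple: "s \<in> D \<Longrightarrow> refl_inversions s = {s}"
  unfolding refl_inversions_def using simple_refl_pos[of s] simple_pos[of s] refl_self[OF nz, of s] DR
    not_pos_neg[of s] by auto

lemma count_refl_simple:
  assumes s: "s \<in> D"
  shows "card {e\<in>P. Q (refl s e)} + (if Q s then 1 else 0) = card {e\<in>P. Q e} + (if Q (- s) then 1 else 0)"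
proof -
  have "s \<in> R" using s DR by auto
  from count_refl[OF this, of Q] show ?thesis unfolding refl_inversions_simple[OF s] by (simp add: Collect_conv_if split: if_splits)
qed

definition left_inv :: "('v \<Rightarrow> 'v) \<Rightarrow> 'v \<Rightarrow> bool" where "left_inv w e \<longleftrightarrow> (\<exists>d\<in>P. w d = - e)"
definition n_inv :: "('v \<Rightarrow> 'v) \<Rightarrow> nat" where "n_inv w = card {e\<in>P. left_inv w e}"

lemma left_inv_refl_comp: "g \<in> R \<Longrightarrow> left_inv (refl g \<circ> w) e \<longleftrightarrow> left_inv w (refl g e)"
  unfolding left_inv_def using refl_refl[OF nz, of g] by (metis comp_apply refl_neg)

lemma n_inv_refl: "g \<in> R \<Longrightarrow> n_inv (refl g \<circ> w) = card {e\<in>P. left_inv w (refl g e)}"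
  unfolding n_inv_def using left_inv_refl_comp by simp

lemma left_inv_neg_iff:
  assumes w: "w \<in> weyl R" and e: "e \<in> R"
  shows "left_inv w e \<longleftrightarrow> \<not> left_inv w (- e)"
proof -
  obtain d where d: "d \<in> R" "w d = e" using weyl_surjR[OF w e] by auto
  have inj: "\<And>x y. w x = w y \<Longrightarrow> x = y" using weyl_inj[OF w] by (auto dest: injD)
  have a: "left_inv w e \<longleftrightarrow> - d \<in> P"
    unfolding left_inv_def using d inj weyl_neg[OF w] by (metis minus_minus)
  have b: "left_inv w (- e) \<longleftrightarrow> d \<in> P"
    unfolding left_inv_def using d inj weyl_neg[OF w] by (metis minus_minus)
  show ?thesis using a b neg_iff[OF d(1)] by auto
qed

lemma n_inv_simple:
  assumes w: "w \<in> weyl R" and s: "s \<in> D"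
  shows "n_inv (refl s \<circ> w) = (if left_inv w s then n_inv w - 1 else n_inv w + 1)"
    and "left_inv w s \<Longrightarrow> n_inv w \<ge> 1"
proof -
  have sR: "s \<in> R" using s DR by auto
  have c: "n_inv (refl s \<circ> w) + (if left_inv w s then 1 else 0) = n_inv w + (if left_inv w (- s) then 1 else 0)"
    using count_refl_simple[OF s, of "left_inv w"] n_inv_refl[OF sR] unfolding n_inv_def by simp
  have "left_inv w s \<longleftrightarrow> \<not> left_inv w (- s)" using left_inv_neg_iff[OF w sR] .
  then show "n_inv (refl s \<circ> w) = (if left_inv w s then n_inv w - 1 else n_inv w + 1)" using c by auto
  show "left_inv w s \<Longrightarrow> n_inv w \<ge> 1" using c \<open>left_inv w s \<longleftrightarrow> _\<close> by auto
qed

lemma n_inv_id: "n_inv id = 0" and n_inv_id': "n_inv (\<lambda>x. x) = 0"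
proof -
  have "{e\<in>P. left_inv id e} = {}" unfolding left_inv_def using not_pos_neg by fastforce
  then show "n_inv id = 0" "n_inv (\<lambda>x. x) = 0" unfolding n_inv_def id_def by (metis card.empty)+
qed

lemma n_inv_le_length: "set as \<subseteq> D \<Longrightarrow> n_inv (refl_prod as) \<le> length as"
proof (induction as)
  case Nil then show ?case by (simp add: n_inv_id n_inv_id')
next
  case (Cons a as)
  have w: "refl_prod as \<in> weyl R" using Cons.prems DR by (auto intro!: refl_prod_weyl)
  have "refl_prod (a # as) = refl a \<circ> refl_prod as" by simp
  then show ?case using n_inv_simple(1)[OF w, of a] Cons by (auto simp: o_def)
qed

lemma n_inv_zero_iff:
  assumes w: "w \<in> weyl R"
  shows "n_inv w = 0 \<longleftrightarrow> (\<forall>d\<in>P. w d \<in> P)"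
proof
  assume "n_inv w = 0"
  then have n: "\<And>e. e \<in> P \<Longrightarrow> \<not> left_inv w e" unfolding n_inv_def using finP by (auto simp: card_eq_0_iff)
  show "\<forall>d\<in>P. w d \<in> P"
  proof
    fix d assume d: "d \<in> P"
    then have wd: "w d \<in> R" using weyl_R[OF w] PR by auto
    show "w d \<in> P"
    proof (rule ccontr)
      assume "w d \<notin> P"
      then have "- w d \<in> P" using neg_iff[OF wd] by auto
      moreover have "left_inv w (- w d)" unfolding left_inv_def using d by auto
      ultimately show False using n by auto
    qed
  qed
next
  assume a: "\<forall>d\<in>P. w d \<in> P"
  have "\<And>e. e \<in> P \<Longrightarrow> \<not> left_inv w e" unfolding left_inv_def using a not_pos_neg by (metis)
  then have "{e\<in>P. left_inv w e} = {}" by auto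
  then show "n_inv w = 0" unfolding n_inv_def by (metis card.empty)
qed

lemma exchange:
  assumes "set cs \<subseteq> D" "b \<in> P" "refl_prod cs b \<notin> P"
  shows "\<exists>cs1 c cs2. cs = cs1 @ c # cs2 \<and> refl_prod cs2 b = c"
  using assms
proof (induction cs)
  case Nil then show ?case by simp
next
  case (Cons c cs')
  show ?case
  proof (cases "refl_prod cs' b \<in> P")
    case True
    have "refl c (refl_prod cs' b) \<notin> P" using Cons.prems by simp
    then have "refl_prod cs' b = c" using simple_refl_pos[of c "refl_prod cs' b"] True Cons.prems by auto
    then show ?thesis by (intro exI[of _ "[]"] exI[of _ c] exI[of _ cs']) auto
  next
    case False
    then obtain cs1 c' cs2 where "cs' = cs1 @ c' # cs2" "refl_prod cs2 b = c'" using Cons by auto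
    then show ?thesis by (intro exI[of _ "c # cs1"] exI[of _ c'] exI[of _ cs2]) auto
  qed
qed

lemma pos_preserving_id:
  assumes "set as \<subseteq> D" "\<forall>d\<in>P. refl_prod as d \<in> P"
  shows "refl_prod as = id"
  using assms
proof (induction "length as" arbitrary: as rule: less_induct)
  case less
  show ?case
  proof (cases as rule: rev_cases)
    case Nil then show ?thesis by simp
  next
    case (snoc bs s)
    have s: "s \<in> D" and bs: "set bs \<subseteq> D" using less.prems snoc by auto
    have sR: "s \<in> R" using s DR by auto
    have "refl_prod as s = refl_prod bs (- s)" using snoc refl_self[OF nz[OF sR]] by (simp add: refl_prod_append)
    also have "\<dots> = - refl_prod bs s" by (rule linear_neg[OF linear_refl_prod])
    finally have "- refl_prod bs s \<in> P" using less.prems(2) simple_pos[OF s] by metis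
    then have "refl_prod bs s \<notin> P" using not_pos_neg by fastforce
    then obtain cs1 c cs2 where cs: "bs = cs1 @ c # cs2" "refl_prod cs2 s = c"
      using exchange[OF bs simple_pos[OF s]] by blast
    have cs2R: "set cs2 \<subseteq> R" using bs cs DR by auto
    have rc: "refl c = refl_prod (cs2 @ [s] @ rev cs2)" using refl_conj_refl_prod[OF cs2R, of s] cs by simp
    have "refl c \<circ> refl_prod cs2 \<circ> refl s = refl_prod cs2"
    proof
      fix x
      have "(refl c \<circ> refl_prod cs2 \<circ> refl s) x = refl_prod cs2 (refl s (refl_prod (rev cs2) (refl_prod cs2 (refl s x))))"
        using rc by (simp add: refl_prod_append)
      also have "\<dots> = refl_prod cs2 x" using refl_prod_rev[OF cs2R] refl_refl[OF nz[OF sR]] by simp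
      finally show "(refl c \<circ> refl_prod cs2 \<circ> refl s) x = refl_prod cs2 x" .
    qed
    then have eq: "refl_prod as = refl_prod (cs1 @ cs2)"
      using snoc cs by (simp add: refl_prod_append o_assoc)
    have "refl_prod (cs1 @ cs2) = id"
      using less.hyps[of "cs1 @ cs2"] less.prems eq snoc cs by auto
    then show ?thesis using eq by simp
  qed
qed

lemma weyl_pos_id: "w \<in> weyl R \<Longrightarrow> \<forall>d\<in>P. w d \<in> P \<Longrightarrow> w = id"
  using weyl_word pos_preserving_id by blast

lemma exists_simple_left_inv:
  assumes w: "w \<in> weyl R" and n: "n_inv w \<noteq> 0"
  shows "\<exists>s\<in>D. left_inv w s"
proof (rule ccontr)
  assume "\<not> ?thesis"
  then have ns: "\<And>s. s \<in> D \<Longrightarrow> \<not> left_inv w s" by auto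
  obtain v where v: "v \<in> weyl R" "\<forall>x. v (w x) = x" "\<forall>x. w (v x) = x" using weyl_inv[OF w] by blast
  have vs: "v s \<in> P" if s: "s \<in> D" for s
  proof (rule ccontr)
    assume "v s \<notin> P"
    moreover have "v s \<in> R" using weyl_R[OF v(1)] s DR by auto
    ultimately have "- v s \<in> P" using neg_iff by auto
    moreover have "w (- v s) = - s" using weyl_neg[OF w] v by simp
    ultimately have "left_inv w s" unfolding left_inv_def by auto
    with ns s show False by auto
  qed
  have "\<And>e. e \<in> P \<Longrightarrow> \<not> left_inv w e"
  proof
    fix e assume e: "e \<in> P" and "left_inv w e"
    then obtain d where d: "d \<in> P" "w d = - e" unfolding left_inv_def by auto
    have "v e = (\<Sum>a\<in>D. coeff D e a *\<^sub>R v a)"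
      using sum_coeff[of e] weyl_linear[OF v(1)]
      by (metis (no_types, lifting) linear_sum linear_scale sum.cong)
    then have "\<And>b. b \<in> D \<Longrightarrow> coeff D (v e) b = (\<Sum>a\<in>D. coeff D e a * coeff D (v a) b)"
      by (simp add: coeff_sum finD coeff_scale)
    moreover have "\<And>a b. a \<in> D \<Longrightarrow> b \<in> D \<Longrightarrow> coeff D e a * coeff D (v a) b \<ge> 0"
      using e vs by (auto simp: pos_iff)
    ultimately have "\<And>b. b \<in> D \<Longrightarrow> coeff D (v e) b \<ge> 0" by (simp add: sum_nonneg)
    moreover have "v e \<in> R" using weyl_R[OF v(1)] e PR by auto
    ultimately have "v e \<in> P" by (auto simp: pos_iff)
    moreover have "v e = - d" using d v weyl_neg[OF v(1)] by (metis minus_minus)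
    ultimately show False using d not_pos_neg by auto
  qed
  then have "{e\<in>P. left_inv w e} = {}" by auto
  then have "n_inv w = 0" unfolding n_inv_def by (metis card.empty)
  with n show False by simp
qed

lemma word_of_length_n_inv: "w \<in> weyl R \<Longrightarrow> \<exists>as. set as \<subseteq> D \<and> length as = n_inv w \<and> w = refl_prod as"
proof (induction "n_inv w" arbitrary: w)
  case 0
  then have "w = id" using weyl_pos_id n_inv_zero_iff by metis
  then show ?case by (intro exI[of _ "[]"]) (auto simp: n_inv_id')
next
  case (Suc n)
  obtain s where s: "s \<in> D" "left_inv w s" using exists_simple_left_inv[OF Suc.prems] Suc.hyps(2) by auto
  have sR: "s \<in> R" using s DR by auto
  have w': "refl s \<circ> w \<in> weyl R" using weyl_step[OF sR Suc.prems] .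
  have "n_inv (refl s \<circ> w) = n" using n_inv_simple(1)[OF Suc.prems s(1)] s Suc.hyps(2) by simp
  then obtain as where as: "set as \<subseteq> D" "length as = n" "refl s \<circ> w = refl_prod as"
    using Suc.hyps(1)[OF _ w'] by metis
  have "w = refl s \<circ> (refl s \<circ> w)" using refl_refl[OF nz[OF sR]] by (simp add: fun_eq_iff)
  then have "w = refl_prod (s # as)" using as by simp
  then show ?case using as s Suc.hyps(2) by (intro exI[of _ "s # as"]) auto
qed

lemma wlen_eq_n_inv: "w \<in> weyl R \<Longrightarrow> wlen D w = n_inv w"
  unfolding wlen_def refl_prod_def[symmetric]
proof (rule Least_equality)
  assume w: "w \<in> weyl R"
  show "\<exists>as. set as \<subseteq> D \<and> length as = n_inv w \<and> w = refl_prod as" using word_of_length_n_inv[OF w] .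
  show "\<And>y. \<exists>as. set as \<subseteq> D \<and> length as = y \<and> w = refl_prod as \<Longrightarrow> n_inv w \<le> y"
    using n_inv_le_length by blast
qed

section \<open>The highest root and the two root lengths\<close>

lemma hR: "h \<in> R" using hr unfolding is_highest_root_def by auto
lemma h_high: "b \<in> R \<Longrightarrow> a \<in> D \<Longrightarrow> coeff D (h - b) a \<ge> 0"
  using hr unfolding is_highest_root_def by auto

definition dominant where "dominant y \<longleftrightarrow> (\<forall>s\<in>D. s \<bullet> y \<ge> 0)"

lemma dominant_h: "dominant h"
  unfolding dominant_def
proof
  fix s assume s: "s \<in> D"
  show "s \<bullet> h \<ge> 0"
  proof (rule ccontr)
    assume n: "\<not> s \<bullet> h \<ge> 0"
    have sR: "s \<in> R" using s DR by auto
    have "coeff D (h - refl s h) s = pairing h s"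
      by (simp add: refl_pairing coeff_diff coeff_scale coeff_simple s)
    moreover have "pairing h s < 0" unfolding pairing_def using n nz[OF sR]
      by (simp add: divide_neg_pos inner_commute)
    moreover have "coeff D (h - refl s h) s \<ge> 0" using h_high[OF refl_closed[OF sR hR] s] .
    ultimately show False by simp
  qed
qed

lemma nonneg_inner_dom:
  assumes "\<And>a. a \<in> D \<Longrightarrow> coeff D x a \<ge> 0" "dominant y"
  shows "x \<bullet> y \<ge> 0"
  using assms unfolding dominant_def by (subst inner_expand) (auto intro!: sum_nonneg)

lemma pos_inner_h: "e \<in> P \<Longrightarrow> e \<bullet> h \<ge> 0"
  by (rule nonneg_inner_dom[OF _ dominant_h]) (auto simp: pos_iff)

lemma D_nonempty: "D \<noteq> {}"
proof
  assume "D = {}"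
  then have "span D = {0}" by simp
  moreover obtain b :: 'v where "b \<in> Basis" using nonempty_Basis by blast
  then have "b \<noteq> 0" by auto
  ultimately show False using spanD by auto
qed

lemma R_nonempty: "R \<noteq> {}" using D_nonempty DR by auto

lemma hP: "h \<in> P"
proof -
  obtain s where s: "s \<in> D" using D_nonempty by auto
  have "coeff D (h - s) s \<ge> 0" using h_high[of s s] s DR by auto
  then have "coeff D h s \<ge> 1" by (simp add: coeff_diff coeff_simple s)
  then show ?thesis using pos_if_coeff[OF hR s] by simp
qed

lemma sqmax_ge: "a \<in> R \<Longrightarrow> a \<bullet> a \<le> sqmax R"
  unfolding sqmax_def using finR by auto
lemma sqmin_le: "a \<in> R \<Longrightarrow> sqmin R \<le> a \<bullet> a"
  unfolding sqmin_def using finR by auto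
lemma sqmax_ex: "\<exists>a\<in>R. a \<bullet> a = sqmax R"
  unfolding sqmax_def using finR R_nonempty by (metis (no_types, lifting) Max_in finite_imageI image_iff image_is_empty)
lemma sqmin_ex: "\<exists>a\<in>R. a \<bullet> a = sqmin R"
  unfolding sqmin_def using finR R_nonempty by (metis (no_types, lifting) Min_in finite_imageI image_iff image_is_empty)
lemma sq_pos: "a \<in> R \<Longrightarrow> a \<bullet> a > 0" using nz by auto
lemma sqmin_pos: "sqmin R > 0" using sqmin_ex sq_pos by metis

lemma long_iff: "a \<in> long_roots R \<longleftrightarrow> a \<in> R \<and> a \<bullet> a = sqmax R"
  unfolding long_roots_def by auto

text \<open>A long root of maximal height is dominant; pairing the nonnegative combination
  \<open>h - b\<close> with both dominant roots \<open>h\<close> and \<open>b\<close> gives \<open>(b|b) \<le> (h|h)\<close>.\<close>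
lemma h_long: "h \<in> long_roots R"
proof -
  define L where "L = long_roots R"
  have finL: "finite L" unfolding L_def long_roots_def using finR by auto
  have neL: "L \<noteq> {}" unfolding L_def long_roots_def using sqmax_ex by auto
  define m where "m = Max (ht ` L)"
  have "m \<in> ht ` L" unfolding m_def using finL neL by (intro Max_in) auto
  then obtain b where b1: "b \<in> L" "ht b = m" by auto
  have "\<forall>c\<in>L. ht c \<le> m" unfolding m_def using finL by auto
  then have b: "b \<in> L" "\<forall>c\<in>L. ht c \<le> ht b" using b1 by auto
  have bR: "b \<in> R" and bl: "b \<bullet> b = sqmax R" using b unfolding L_def long_roots_def by auto
  have domb: "dominant b"
    unfolding dominant_def
  proof
    fix s assume s: "s \<in> D"
    have sR: "s \<in> R" using s DR by auto
    show "s \<bullet> b \<ge> 0"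
    proof (rule ccontr)
      assume n: "\<not> s \<bullet> b \<ge> 0"
      have "pairing b s < 0" unfolding pairing_def using n nz[OF sR]
        by (simp add: divide_neg_pos inner_commute)
      moreover have "ht (refl s b) = ht b - pairing b s"
        unfolding refl_pairing by (simp add: ht_diff ht_scale ht_simple s)
      moreover have "refl s b \<in> L"
        unfolding L_def long_roots_def using refl_closed[OF sR bR] refl_inner[OF nz[OF sR]] bl by auto
      ultimately show False using b by force
    qed
  qed
  have c: "\<And>a. a \<in> D \<Longrightarrow> coeff D (h - b) a \<ge> 0" using h_high[OF bR] .
  have "(h - b) \<bullet> h \<ge> 0" by (rule nonneg_inner_dom[OF c dominant_h])
  moreover have "(h - b) \<bullet> b \<ge> 0" by (rule nonneg_inner_dom[OF c domb])
  ultimately have "h \<bullet> h \<ge> b \<bullet> b" by (simp add: inner_diff_left inner_diff_right inner_commute)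
  then show ?thesis using bl sqmax_ge[OF hR] hR unfolding long_roots_def by auto
qed

lemma not_parallel_strict:
  assumes a: "a \<in> R" and b: "b \<in> R" and ne: "b \<noteq> a" "b \<noteq> - a"
  shows "(a \<bullet> b)^2 < (a \<bullet> a) * (b \<bullet> b)"
proof -
  have le: "\<bar>a \<bullet> b\<bar> \<le> norm a * norm b" by (rule Cauchy_Schwarz_ineq2)
  have "\<bar>a \<bullet> b\<bar> \<noteq> norm a * norm b"
  proof
    assume "\<bar>a \<bullet> b\<bar> = norm a * norm b"
    then have "norm a *\<^sub>R b = norm b *\<^sub>R a \<or> norm a *\<^sub>R b = - norm b *\<^sub>R a"
      using norm_cauchy_schwarz_abs_eq by blast
    moreover have na: "norm a \<noteq> 0" using nz[OF a] by simp
    ultimately have "b = (norm b / norm a) *\<^sub>R a \<or> b = (- norm b / norm a) *\<^sub>R a"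
    proof (elim disjE)
      assume e: "norm a *\<^sub>R b = norm b *\<^sub>R a"
      have "b = (1 / norm a) *\<^sub>R (norm a *\<^sub>R b)" using na by simp
      also have "\<dots> = (norm b / norm a) *\<^sub>R a" using e by simp
      finally show ?thesis by simp
    next
      assume e: "norm a *\<^sub>R b = - norm b *\<^sub>R a"
      have "b = (1 / norm a) *\<^sub>R (norm a *\<^sub>R b)" using na by simp
      also have "\<dots> = (- norm b / norm a) *\<^sub>R a" using e by simp
      finally show ?thesis by simp
    qed
    then obtain c where c: "b = c *\<^sub>R a" by blast
    then have "c = 1 \<or> c = -1" using reduced[OF a] b by blast
    then show False using c ne by auto
  qed
  then have lt: "\<bar>a \<bullet> b\<bar> < norm a * norm b" using le by simp
  have "(a \<bullet> b)^2 = \<bar>a \<bullet> b\<bar>^2" by simp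
  also have "\<dots> < (norm a * norm b)^2" using lt by (intro power_strict_mono) auto
  also have "\<dots> = (a \<bullet> a) * (b \<bullet> b)" by (simp add: power_mult_distrib dot_square_norm)
  finally show ?thesis .
qed

lemma pairing_prod_lt4:
  assumes a: "a \<in> R" and b: "b \<in> R" and ne: "b \<noteq> a" "b \<noteq> - a"
  shows "pairing a b * pairing b a < 4"
proof -
  have "pairing a b * pairing b a = 4 * (a \<bullet> b)^2 / ((a \<bullet> a) * (b \<bullet> b))"
    unfolding pairing_def by (simp add: power2_eq_square inner_commute field_simps)
  moreover have "(a \<bullet> a) * (b \<bullet> b) > 0" using sq_pos a b by auto
  ultimately show ?thesis using not_parallel_strict[OF assms] by (simp add: divide_less_eq)
qed

lemma pairing_ratio:
  assumes a: "a \<in> R" and b: "b \<in> R"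
  shows "pairing a b * (b \<bullet> b) = pairing b a * (a \<bullet> a)"
  unfolding pairing_def using sq_pos[OF a] sq_pos[OF b] by (simp add: inner_commute)

lemma Ints_sq_less_4: "x \<in> \<int> \<Longrightarrow> x^2 < 4 \<Longrightarrow> x = -1 \<or> x = 0 \<or> x = (1::real)"
proof -
  assume "x \<in> \<int>" "x^2 < 4"
  then obtain k where k: "x = of_int k" using Ints_cases by blast
  then have "k^2 < 4" using \<open>x^2 < 4\<close> by (metis of_int_less_iff of_int_numeral of_int_power)
  have "\<bar>k\<bar> \<le> 1"
  proof (rule ccontr)
    assume "\<not> \<bar>k\<bar> \<le> 1"
    then have "\<bar>k\<bar> \<ge> 2" by simp
    then have "\<bar>k\<bar> * \<bar>k\<bar> \<ge> 2 * 2" by (intro mult_mono) auto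
    then have "k^2 \<ge> 4" by (simp add: power2_eq_square abs_mult[symmetric])
    with \<open>k^2 < 4\<close> show False by simp
  qed
  then have "k = -1 \<or> k = 0 \<or> k = 1" by auto
  then show ?thesis using k by auto
qed

lemma pairing_short_long:
  assumes a: "a \<in> R" and b: "b \<in> R" and ne: "b \<noteq> a" "b \<noteq> - a" and le: "b \<bullet> b \<le> a \<bullet> a"
  shows "pairing b a = -1 \<or> pairing b a = 0 \<or> pairing b a = 1"
proof -
  have r: "pairing a b * (b \<bullet> b) = pairing b a * (a \<bullet> a)" by (rule pairing_ratio[OF a b])
  have "(pairing b a)^2 \<le> pairing a b * pairing b a"
  proof -
    have "(pairing b a)^2 * (b \<bullet> b) \<le> (pairing b a)^2 * (a \<bullet> a)"
      using le by (intro mult_left_mono) auto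
    also have "\<dots> = pairing b a * (pairing a b * (b \<bullet> b))" using r by (simp add: power2_eq_square)
    finally have "(pairing b a)^2 * (b \<bullet> b) \<le> (pairing a b * pairing b a) * (b \<bullet> b)"
      by (simp add: algebra_simps)
    then show ?thesis using sq_pos[OF b] by simp
  qed
  then have "(pairing b a)^2 < 4" using pairing_prod_lt4[OF a b ne] by simp
  then show ?thesis using Ints_sq_less_4 pairing_int[OF a b] by blast
qed

lemma pairing_same_len:
  assumes a: "a \<in> R" and b: "b \<in> R" and ne: "b \<noteq> a" "b \<noteq> - a" and eq: "b \<bullet> b = a \<bullet> a"
  shows "pairing b a = pairing a b" "pairing b a = -1 \<or> pairing b a = 0 \<or> pairing b a = 1"
proof -
  show "pairing b a = pairing a b" unfolding pairing_def using eq by (simp add: inner_commute)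
  show "pairing b a = -1 \<or> pairing b a = 0 \<or> pairing b a = 1"
    using pairing_short_long[OF a b ne] eq by simp
qed

lemma pairing_zero_iff: "a \<in> R \<Longrightarrow> pairing b a = 0 \<longleftrightarrow> b \<bullet> a = 0"
  unfolding pairing_def using sq_pos by auto

section \<open>Weyl orbits and the two root lengths\<close>

lemma weyl_orbit_not_orthogonal:
  assumes a: "a \<in> R" and b: "b \<in> R"
  shows "\<exists>w\<in>weyl R. w a \<bullet> b \<noteq> 0"
proof (rule ccontr)
  assume orth: "\<not> ?thesis"
  define Orb where "Orb = {w a | w. w \<in> weyl R}"
  define U where "U = span Orb"
  have stable: "refl c ` U \<subseteq> U" if c: "c \<in> R" for c
  proof -
    have "refl c ` Orb \<subseteq> Orb"
    proof (rule image_subsetI)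
      fix x assume "x \<in> Orb"
      then obtain w where "x = w a" "w \<in> weyl R" unfolding Orb_def by blast
      then show "refl c x \<in> Orb" unfolding Orb_def
        by (intro CollectI exI[of _ "refl c \<circ> w"]) (simp add: weyl_step c)
    qed
    then show ?thesis unfolding U_def using span_linear_image[OF linear_refl] span_mono by metis
  qed
  define A where "A = {c\<in>R. \<exists>u\<in>U. u \<bullet> c \<noteq> 0}"
  define B where "B = {c\<in>R. \<forall>u\<in>U. u \<bullet> c = 0}"
  have "A \<subseteq> U" unfolding A_def using mem_subspace_if_refl_stable[OF subspace_span] stable
    unfolding U_def by blast
  then have "\<forall>x\<in>A. \<forall>y\<in>B. x \<bullet> y = 0" unfolding B_def by auto
  moreover have "a \<in> A"
    unfolding A_def U_def Orb_def using a nz[OF a] weyl_id by (force intro: span_base)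
  moreover have "b \<in> B"
  proof -
    have "\<forall>z\<in>Orb. z \<bullet> b = 0" unfolding Orb_def using orth by auto
    then show ?thesis unfolding B_def U_def using b orthogonal_to_span[of _ Orb b]
      unfolding orthogonal_def by (simp add: inner_commute)
  qed
  moreover have "A \<union> B = R" "A \<inter> B = {}" unfolding A_def B_def by auto
  ultimately show False using irr unfolding irreducible_rs_def by blast
qed

lemma weyl_conj_of_not_orthogonal:
  assumes c: "c \<in> R" and b: "b \<in> R" and cc: "c \<bullet> c = b \<bullet> b" and cb: "c \<bullet> b \<noteq> 0"
  shows "\<exists>w\<in>weyl R. w c = b"
proof -
  consider "c = b" | "c = - b" | "c \<noteq> b" "c \<noteq> - b" by blast
  then show ?thesis
  proof cases
    case 1 then show ?thesis using weyl_id by (metis id_apply)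
  next
    case 2
    then have "refl b c = b" using refl_neg[of b b] refl_self[OF nz[OF b]] by simp
    then show ?thesis using weyl_refl[OF b] by blast
  next
    case 3
    have "pairing c b = pairing b c" "pairing c b \<in> {-1, 0, 1}"
      using pairing_same_len[OF b c 3] cc by auto
    moreover have "pairing c b \<noteq> 0" using pairing_zero_iff[OF b] cb by auto
    ultimately consider "pairing c b = 1" "pairing b c = 1" | "pairing c b = -1" "pairing b c = -1"
      by fastforce
    then show ?thesis
    proof cases
      case 1
      have "refl b c = c - b" "refl c b = b - c" using 1 by (simp_all add: refl_pairing)
      then have "refl c (refl b c) = - b" using refl_diff[of c c b] refl_self[OF nz[OF c]] by simp
      then have "(refl b \<circ> refl c \<circ> refl b) c = b" by (simp add: refl_neg refl_self nz[OF b])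
      moreover have "refl b \<circ> refl c \<circ> refl b \<in> weyl R"
        using weyl_step[OF b weyl_step[OF c weyl_refl[OF b]]] by (simp add: o_assoc)
      ultimately show ?thesis by blast
    next
      case 2
      have "refl b c = c + b" "refl c b = b + c" using 2 by (simp_all add: refl_pairing)
      then have "refl c (refl b c) = b" using refl_add[of c c b] refl_self[OF nz[OF c]] by simp
      moreover have "refl c \<circ> refl b \<in> weyl R" using weyl_step[OF c weyl_refl[OF b]] .
      ultimately show ?thesis by (metis comp_apply)
    qed
  qed
qed

lemma weyl_transitive_same_length:
  assumes a: "a \<in> R" and b: "b \<in> R" and eq: "a \<bullet> a = b \<bullet> b"
  shows "\<exists>w\<in>weyl R. w a = b"
proof -
  obtain w0 where w0: "w0 \<in> weyl R" "w0 a \<bullet> b \<noteq> 0" using weyl_orbit_not_orthogonal[OF a b] by auto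
  have "w0 a \<in> R" "w0 a \<bullet> w0 a = b \<bullet> b" using weyl_R[OF w0(1) a] weyl_inner[OF w0(1)] eq by auto
  then obtain w where "w \<in> weyl R" "w (w0 a) = b" using weyl_conj_of_not_orthogonal[OF _ b _ w0(2)] by blast
  then show ?thesis using weyl_comp[OF _ w0(1)] by (metis comp_apply)
qed

lemma int_prod_cases:
  fixes m n :: int
  assumes "0 < m * n" "m * n < 4"
  shows "(\<bar>m\<bar> = 1 \<and> (\<bar>n\<bar> = 1 \<or> \<bar>n\<bar> = 2 \<or> \<bar>n\<bar> = 3)) \<or> (\<bar>n\<bar> = 1 \<and> (\<bar>m\<bar> = 2 \<or> \<bar>m\<bar> = 3))"
proof -
  have m0: "m \<noteq> 0" and n0: "n \<noteq> 0" using assms by auto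
  have am: "\<bar>m\<bar> * \<bar>n\<bar> < 4" using assms by (simp add: abs_mult[symmetric])
  have "\<bar>m\<bar> \<ge> 1" "\<bar>n\<bar> \<ge> 1" using m0 n0 by auto
  then have "\<bar>m\<bar> = 1 \<or> \<bar>n\<bar> = 1"
  proof -
    have "\<not> (\<bar>m\<bar> \<ge> 2 \<and> \<bar>n\<bar> \<ge> 2)"
    proof
      assume "\<bar>m\<bar> \<ge> 2 \<and> \<bar>n\<bar> \<ge> 2"
      then have "\<bar>m\<bar> * \<bar>n\<bar> \<ge> 2 * 2" by (intro mult_mono) auto
      with am show False by simp
    qed
    then show ?thesis using \<open>\<bar>m\<bar> \<ge> 1\<close> \<open>\<bar>n\<bar> \<ge> 1\<close> by linarith
  qed
  then show ?thesis using am \<open>\<bar>m\<bar> \<ge> 1\<close> \<open>\<bar>n\<bar> \<ge> 1\<close> by auto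
qed

lemma ratio_cases:
  assumes a: "a \<in> R" and b: "b \<in> R"
  shows "a \<bullet> a = b \<bullet> b \<or> a \<bullet> a = 2 * (b \<bullet> b) \<or> a \<bullet> a = 3 * (b \<bullet> b) \<or>
         b \<bullet> b = 2 * (a \<bullet> a) \<or> b \<bullet> b = 3 * (a \<bullet> a)"
proof -
  obtain w where w: "w \<in> weyl R" "w a \<bullet> b \<noteq> 0" using weyl_orbit_not_orthogonal[OF a b] by auto
  define c where "c = w a"
  have cR: "c \<in> R" unfolding c_def using weyl_R[OF w(1) a] .
  have cc: "c \<bullet> c = a \<bullet> a" unfolding c_def using weyl_inner[OF w(1)] by simp
  have cb: "c \<bullet> b \<noteq> 0" using w unfolding c_def by simp
  show ?thesis
  proof (cases "b = c \<or> b = - c")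
    case True then show ?thesis using cc by auto
  next
    case False
    then have ne: "b \<noteq> c" "b \<noteq> - c" by auto
    obtain m where m: "pairing c b = of_int m" using pairing_int[OF b cR] Ints_cases by blast
    obtain n where n: "pairing b c = of_int n" using pairing_int[OF cR b] Ints_cases by blast
    have lt: "m * n < 4" using pairing_prod_lt4[OF cR b ne] m n by (metis of_int_less_iff of_int_mult of_int_numeral)
    have "pairing c b * pairing b c = 4 * (c \<bullet> b)^2 / ((c \<bullet> c) * (b \<bullet> b))"
      unfolding pairing_def by (simp add: power2_eq_square inner_commute field_simps)
    moreover have "(c \<bullet> c) * (b \<bullet> b) > 0" using sq_pos cR b by auto
    ultimately have "pairing c b * pairing b c > 0" using cb by simp
    then have gt: "m * n > 0" using m n by (metis of_int_0_less_iff of_int_mult)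
    have r: "m * (b \<bullet> b) = n * (c \<bullet> c)" using pairing_ratio[OF cR b] m n by simp
    have signs: "(m > 0 \<and> n > 0) \<or> (m < 0 \<and> n < 0)" using gt zero_less_mult_iff by blast
    from signs have r': "real_of_int \<bar>m\<bar> * (b \<bullet> b) = real_of_int \<bar>n\<bar> * (c \<bullet> c)"
    proof
      assume "m > 0 \<and> n > 0" then show ?thesis using r by simp
    next
      assume "m < 0 \<and> n < 0" then show ?thesis using r by simp
    qed
    from int_prod_cases[OF gt lt] show ?thesis
    proof (elim disjE conjE)
    qed (use r' cc in \<open>simp_all\<close>)
  qed
qed

lemma root_two_lengths: "a \<in> R \<Longrightarrow> a \<bullet> a = sqmin R \<or> a \<bullet> a = sqmax R"
proof (rule ccontr)
  assume a: "a \<in> R" and n: "\<not> (a \<bullet> a = sqmin R \<or> a \<bullet> a = sqmax R)"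
  obtain s where s: "s \<in> R" "s \<bullet> s = sqmin R" using sqmin_ex by auto
  obtain l where l: "l \<in> R" "l \<bullet> l = sqmax R" using sqmax_ex by auto
  have lt1: "s \<bullet> s < a \<bullet> a" using sqmin_le[OF a] s n by auto
  have lt2: "a \<bullet> a < l \<bullet> l" using sqmax_ge[OF a] l n by auto
  have sp: "s \<bullet> s > 0" using sq_pos[OF s(1)] .
  have c1: "a \<bullet> a \<ge> 2 * (s \<bullet> s)" using ratio_cases[OF a s(1)] lt1 sp by auto
  have c2: "l \<bullet> l \<ge> 2 * (a \<bullet> a)" using ratio_cases[OF l(1) a] lt2 sp by auto
  have c3: "l \<bullet> l \<le> 3 * (s \<bullet> s)" using ratio_cases[OF l(1) s(1)] lt1 lt2 sp by auto
  show False using c1 c2 c3 sp by linarith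
qed

lemma short_root_sq: "a \<in> R \<Longrightarrow> a \<notin> long_roots R \<Longrightarrow> a \<bullet> a = sqmin R"
  using root_two_lengths unfolding long_roots_def by auto

section \<open>The level of a long root\<close>

definition neg_count :: "'v \<Rightarrow> nat" where "neg_count a = card {e\<in>P. e \<bullet> a < 0}"

lemma neg_count_refl_simple:
  assumes s: "s \<in> D"
  shows "real (neg_count (refl s b)) = real (neg_count b) + sgn (s \<bullet> b)"
proof -
  have sR: "s \<in> R" using s DR by auto
  have "{e\<in>P. e \<bullet> refl s b < 0} = {e\<in>P. refl s e \<bullet> b < 0}"
    using inner_refl_left[OF nz[OF sR]] by metis
  then have "neg_count (refl s b) + (if s \<bullet> b < 0 then 1 else 0) = neg_count b + (if (- s) \<bullet> b < 0 then 1 else 0)"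
    unfolding neg_count_def using count_refl_simple[OF s, of "\<lambda>e. e \<bullet> b < 0"] by simp
  then show ?thesis unfolding sgn_if by (auto split: if_splits)
qed

lemma htv_diff: "htv R D (x - y) = htv R D x - htv R D y"
  unfolding htv_def by (simp add: coeff_diff sum_subtractf algebra_simps)
lemma htv_scale: "htv R D (c *\<^sub>R x) = c * htv R D x"
  unfolding htv_def by (simp add: coeff_scale sum_distrib_left algebra_simps)
lemma htv_neg: "htv R D (- x) = - htv R D x"
  using htv_scale[of "-1" x] by simp
lemma htv_simple: "s \<in> D \<Longrightarrow> htv R D s = (if s \<in> long_roots R then 1 else 1 / rr R)"
  unfolding htv_def using finD by (simp add: coeff_simple if_distrib sum.If_cases Int_def)

lemma level_h: "level R D h h = 0" unfolding level_def using hP by simp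
lemma neg_count_h: "neg_count h = 0"
proof -
  have "{e\<in>P. e \<bullet> h < 0} = {}" using pos_inner_h by fastforce
  then show ?thesis unfolding neg_count_def by (metis card.empty)
qed

lemma sgn_pairing: "a \<in> R \<Longrightarrow> sgn (pairing b a) = sgn (b \<bullet> a)"
  unfolding pairing_def using sq_pos[of a] by (simp add: sgn_mult)

lemma simple_refl_pos_iff:
  assumes s: "s \<in> D" and b: "b \<in> R" and ne: "b \<noteq> s" "b \<noteq> - s"
  shows "refl s b \<in> P \<longleftrightarrow> b \<in> P"
proof
  assume "b \<in> P" then show "refl s b \<in> P" using simple_refl_pos[OF s _ ne(1)] by simp
next
  have sR: "s \<in> R" using s DR by auto
  assume r: "refl s b \<in> P"
  have "refl s b \<noteq> s"
  proof
    assume "refl s b = s"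
    then have "refl s (refl s b) = refl s s" by simp
    then show False using ne(2) refl_refl[OF nz[OF sR]] refl_self[OF nz[OF sR]] by simp
  qed
  then have "refl s (refl s b) \<in> P" using simple_refl_pos[OF s r] by simp
  then show "b \<in> P" using refl_refl[OF nz[OF sR]] by simp
qed

lemma pairing_simple_htv:
  assumes s: "s \<in> D" and b: "b \<in> long_roots R" and ne: "b \<noteq> s" "b \<noteq> - s"
  shows "pairing b s * htv R D s = sgn (s \<bullet> b)"
proof -
  have sR: "s \<in> R" using s DR by auto
  have bR: "b \<in> R" and bl: "b \<bullet> b = sqmax R" using b long_iff by auto
  have ne': "s \<noteq> b" "s \<noteq> - b" using ne by auto
  show ?thesis
  proof (cases "s \<in> long_roots R")
    case True
    then have "s \<bullet> s = b \<bullet> b" using bl long_iff by auto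
    then have "pairing b s \<in> {-1, 0, 1}"
      using pairing_same_len(2)[OF sR bR] ne by (metis insert_iff minus_minus)
    then have "pairing b s = sgn (pairing b s)" by auto
    then show ?thesis using True htv_simple[OF s] sgn_pairing[OF sR] by (simp add: inner_commute)
  next
    case False
    then have ss: "s \<bullet> s = sqmin R" using short_root_sq sR by auto
    have le: "s \<bullet> s \<le> b \<bullet> b" using sqmin_le[OF bR] ss by simp
    have "pairing s b \<in> {-1, 0, 1}" using pairing_short_long[OF bR sR ne' le] by auto
    then have p: "pairing s b = sgn (pairing s b)" by auto
    have "pairing b s * sqmin R = pairing s b * sqmax R"
      using pairing_ratio[OF bR sR] ss bl by simp
    moreover have "htv R D s = sqmin R / sqmax R" using False htv_simple[OF s] unfolding rr_def by simp
    moreover have "sqmax R > 0" using bl sq_pos[OF bR] by simp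
    ultimately have "pairing b s * htv R D s = pairing s b" by simp
    then show ?thesis using p sgn_pairing[OF bR] by simp
  qed
qed

lemma level_refl_simple:
  assumes s: "s \<in> D" and b: "b \<in> long_roots R"
  shows "level R D h (refl s b) = level R D h b + sgn (s \<bullet> b)"
proof -
  have sR: "s \<in> R" using s DR by auto
  have bR: "b \<in> R" using b long_iff by auto
  have s_pos: "s \<in> P" "- s \<notin> P" using simple_pos[OF s] not_pos_neg by auto
  consider "s \<bullet> b = 0" | "b = s" | "b = - s" | "s \<bullet> b \<noteq> 0" "b \<noteq> s" "b \<noteq> - s" by blast
  then show ?thesis
  proof cases
    case 1
    then have "refl s b = b" using refl_orth by (simp add: inner_commute)
    then show ?thesis using 1 by simp
  next
    case 2
    then have "s \<in> long_roots R" "refl s b = - s" using b refl_self[OF nz[OF sR]] by auto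
    then show ?thesis using 2 s_pos sq_pos[OF sR] htv_simple[OF s]
      unfolding level_def by (simp add: htv_neg)
  next
    case 3
    then have "s \<in> long_roots R" "refl s b = s"
      using b long_iff neg_closed sR refl_neg[of s s] refl_self[OF nz[OF sR]] by auto
    then show ?thesis using 3 s_pos sq_pos[OF sR] htv_simple[OF s]
      unfolding level_def by (simp add: htv_neg)
  next
    case 4
    have "htv R D (refl s b) = htv R D b - pairing b s * htv R D s"
      unfolding refl_pairing by (simp add: htv_diff htv_scale)
    then show ?thesis using simple_refl_pos_iff[OF s bR 4(2,3)] pairing_simple_htv[OF s b 4(2,3)]
      unfolding level_def by auto
  qed
qed

lemma long_root_word: "a \<in> long_roots R \<Longrightarrow> \<exists>as. set as \<subseteq> D \<and> a = refl_prod as h"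
proof -
  assume a: "a \<in> long_roots R"
  have "\<exists>w\<in>weyl R. w h = a"
    using weyl_transitive_same_length[OF hR] a h_long long_iff by auto
  then show ?thesis using weyl_word by blast
qed

lemma refl_prod_long: "set as \<subseteq> D \<Longrightarrow> a \<in> long_roots R \<Longrightarrow> refl_prod as a \<in> long_roots R"
  using refl_prod_R[of as a] refl_prod_inner[of as a a] DR long_iff by auto

lemma weyl_long: "w \<in> weyl R \<Longrightarrow> a \<in> long_roots R \<Longrightarrow> w a \<in> long_roots R"
  using weyl_R weyl_inner long_iff by auto

lemma level_eq_neg_count: "a \<in> long_roots R \<Longrightarrow> level R D h a = real (neg_count a)"
proof -
  assume a: "a \<in> long_roots R"
  obtain as where as: "set as \<subseteq> D" "a = refl_prod as h" using long_root_word[OF a] by auto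
  have "level R D h (refl_prod as h) = real (neg_count (refl_prod as h))" using as(1)
  proof (induction as)
    case Nil then show ?case by (simp add: level_h neg_count_h)
  next
    case (Cons s as)
    have s: "s \<in> D" using Cons.prems by auto
    have bl: "refl_prod as h \<in> long_roots R" using refl_prod_long Cons.prems h_long by auto
    show ?case using level_refl_simple[OF s bl] neg_count_refl_simple[OF s, of "refl_prod as h"] Cons by simp
  qed
  then show ?thesis using as by simp
qed

section \<open>Minimal coset representatives\<close>

abbreviation I where "I \<equiv> Itil D h"
abbreviation X where "X \<equiv> XI R D h"

lemma I_sub: "I \<subseteq> D" unfolding Itil_def by auto

lemma coeff_span_I: "x \<in> span I \<Longrightarrow> a \<notin> I \<Longrightarrow> coeff D x a = 0"
proof -
  assume x: "x \<in> span I" and a: "a \<notin> I"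
  have "representation D x = representation I x"
    using real_vector.representation_extend[OF indepD x I_sub] .
  then show ?thesis unfolding coeff_def using real_vector.representation_ne_zero a by metis
qed

lemma pos_orth_span:
  assumes e: "e \<in> P" and o: "e \<bullet> h = 0"
  shows "e \<in> span I"
proof -
  have t: "\<forall>a\<in>D. coeff D e a * (a \<bullet> h) = 0"
  proof -
    have nn: "\<forall>a\<in>D. coeff D e a * (a \<bullet> h) \<ge> 0"
      using e dominant_h unfolding dominant_def by (auto simp: pos_iff inner_commute)
    have "(\<Sum>a\<in>D. coeff D e a * (a \<bullet> h)) = 0" using inner_expand[of e h] o by simp
    then show ?thesis using sum_nonneg_eq_0_iff[OF finD, of "\<lambda>a. coeff D e a * (a \<bullet> h)"] nn by simp
  qed
  have "e = (\<Sum>a\<in>D. coeff D e a *\<^sub>R a)" using sum_coeff by simp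
  also have "\<dots> \<in> span I"
  proof (intro span_sum)
    fix a assume a: "a \<in> D"
    show "coeff D e a *\<^sub>R a \<in> span I"
    proof (cases "coeff D e a = 0")
      case True then show ?thesis by (simp add: span_zero)
    next
      case False
      then have "a \<bullet> h = 0" using t a by auto
      then have "a \<in> I" unfolding Itil_def using a by (auto simp: inner_commute)
      then show ?thesis by (intro span_scale span_base)
    qed
  qed
  finally show ?thesis .
qed

lemma XI_weyl: "x \<in> X \<Longrightarrow> x \<in> weyl R" unfolding XI_def by auto
lemma XI_pos: "x \<in> X \<Longrightarrow> b \<in> P \<Longrightarrow> b \<in> span I \<Longrightarrow> x b \<in> P" unfolding XI_def by auto

lemma left_inv_of_inner_neg:
  assumes w: "w \<in> weyl R" and e: "e \<in> P" and lt: "e \<bullet> w h < 0"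
  shows "left_inv w e"
proof -
  obtain d where d: "d \<in> R" "w d = e" using weyl_surjR[OF w] e PR by blast
  have "d \<bullet> h < 0" using lt d weyl_inner[OF w, of d h] by simp
  then have "d \<notin> P" using pos_inner_h by force
  then have "- d \<in> P" using neg_iff d by auto
  moreover have "w (- d) = - e" using weyl_neg[OF w] d by simp
  ultimately show ?thesis unfolding left_inv_def by auto
qed

lemma XI_left_inv_iff:
  assumes x: "x \<in> X" and e: "e \<in> P"
  shows "left_inv x e \<longleftrightarrow> e \<bullet> x h < 0"
proof
  assume q: "left_inv x e"
  have w: "x \<in> weyl R" using XI_weyl[OF x] .
  obtain d where d: "d \<in> P" "x d = - e" using q unfolding left_inv_def by auto
  have eq: "e \<bullet> x h = - (d \<bullet> h)" using weyl_inner[OF w, of d h] d by simp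
  show "e \<bullet> x h < 0"
  proof (rule ccontr)
    assume "\<not> e \<bullet> x h < 0"
    then have "d \<bullet> h = 0" using eq pos_inner_h[OF d(1)] by simp
    then have "x d \<in> P" using XI_pos[OF x d(1) pos_orth_span[OF d(1)]] by simp
    then show False using d e not_pos_neg by auto
  qed
next
  assume "e \<bullet> x h < 0"
  then show "left_inv x e" using left_inv_of_inner_neg[OF XI_weyl[OF x] e] by simp
qed

lemma n_inv_XI: "x \<in> X \<Longrightarrow> n_inv x = neg_count (x h)"
proof -
  assume x: "x \<in> X"
  have "{e\<in>P. left_inv x e} = {e\<in>P. e \<bullet> x h < 0}" using XI_left_inv_iff[OF x] by auto
  then show ?thesis unfolding n_inv_def neg_count_def by simp
qed

lemma XI_long: "x \<in> X \<Longrightarrow> x h \<in> long_roots R"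
  using weyl_long[OF XI_weyl h_long] .

lemma level_XI: "x \<in> X \<Longrightarrow> level R D h (x h) = real (wlen D x)"
  using level_eq_neg_count[OF XI_long] n_inv_XI wlen_eq_n_inv XI_weyl by simp

lemma weyl_eq_of_left_inv_eq:
  assumes wx: "x \<in> weyl R" and wy: "y \<in> weyl R"
    and Q: "\<And>e. e \<in> P \<Longrightarrow> left_inv x e \<longleftrightarrow> left_inv y e"
  shows "x = y"
proof -
  obtain v where v: "v \<in> weyl R" "\<forall>t. v (y t) = t" "\<forall>t. y (v t) = t" using weyl_inv[OF wy] by blast
  have injx: "\<And>s t. x s = x t \<Longrightarrow> s = t" using weyl_inj[OF wx] by (auto dest: injD)
  have "\<forall>d\<in>P. (v \<circ> x) d \<in> P"
  proof
    fix d assume d: "d \<in> P"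
    have xdR: "x d \<in> R" using weyl_R[OF wx] d PR by auto
    show "(v \<circ> x) d \<in> P"
    proof (cases "x d \<in> P")
      case True
      show ?thesis
      proof (rule ccontr)
        assume n: "\<not> ?thesis"
        have "v (x d) \<in> R" using weyl_R[OF v(1) xdR] .
        then have "- v (x d) \<in> P" using n neg_iff by auto
        moreover have "y (- v (x d)) = - x d" using weyl_neg[OF wy] v by simp
        ultimately have "left_inv y (x d)" unfolding left_inv_def by auto
        then have "left_inv x (x d)" using Q True by auto
        then obtain d' where d': "d' \<in> P" "x d' = - x d" unfolding left_inv_def by auto
        then have "d' = - d" using injx weyl_neg[OF wx] by metis
        then show False using d d' not_pos_neg by auto
      qed
    next
      case False
      then have e: "- x d \<in> P" using neg_iff xdR by auto
      have "left_inv x (- x d)" unfolding left_inv_def using d by auto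
      then have "left_inv y (- x d)" using Q e by auto
      then obtain d' where d': "d' \<in> P" "y d' = x d" unfolding left_inv_def by auto
      then have "v (x d) = d'" using v by metis
      then show ?thesis using d' by simp
    qed
  qed
  then have "v \<circ> x = id" using weyl_pos_id weyl_comp[OF v(1) wx] by blast
  then show ?thesis using v by (metis comp_apply id_apply ext)
qed

lemma XI_inj:
  assumes x: "x \<in> X" and y: "y \<in> X" and eq: "x h = y h"
  shows "x = y"
  using weyl_eq_of_left_inv_eq[OF XI_weyl[OF x] XI_weyl[OF y]] XI_left_inv_iff[OF x] XI_left_inv_iff[OF y] eq
  by simp

lemma weyl_pos_of_support:
  assumes w: "w \<in> weyl R" and S: "S \<subseteq> D" and pos: "\<forall>a\<in>S. w a \<in> P"
    and g: "g \<in> P" and gs: "\<forall>a\<in>D. a \<notin> S \<longrightarrow> coeff D g a = 0"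
  shows "w g \<in> P"
proof -
  have "w g = (\<Sum>a\<in>D. coeff D g a *\<^sub>R w a)"
    using sum_coeff[of g] weyl_linear[OF w]
    by (metis (no_types, lifting) linear_sum linear_scale sum.cong)
  then have c: "\<And>b. coeff D (w g) b = (\<Sum>a\<in>D. coeff D g a * coeff D (w a) b)"
    by (simp add: coeff_sum finD coeff_scale)
  have "\<And>b. b \<in> D \<Longrightarrow> coeff D (w g) b \<ge> 0"
  proof -
    fix b assume b: "b \<in> D"
    have "\<And>a. a \<in> D \<Longrightarrow> coeff D g a * coeff D (w a) b \<ge> 0"
    proof -
      fix a assume a: "a \<in> D"
      show "coeff D g a * coeff D (w a) b \<ge> 0"
      proof (cases "a \<in> S")
        case True then show ?thesis using g pos a b by (auto simp: pos_iff)
      next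
        case False then show ?thesis using gs a by simp
      qed
    qed
    then show "coeff D (w g) b \<ge> 0" using c by (simp add: sum_nonneg)
  qed
  moreover have "w g \<in> R" using weyl_R[OF w] g PR by auto
  ultimately show ?thesis by (auto simp: pos_iff)
qed

lemma n_inv_comp_simple_less:
  assumes w: "w \<in> weyl R" and s: "s \<in> D" and n: "w s \<notin> P"
  shows "n_inv (w \<circ> refl s) < n_inv w"
proof -
  have sR: "s \<in> R" using s DR by auto
  have wsR: "w s \<in> R" using weyl_R[OF w sR] .
  define e0 where "e0 = - w s"
  have e0: "e0 \<in> P" unfolding e0_def using n neg_iff wsR by auto
  have injw: "\<And>s t. w s = w t \<Longrightarrow> s = t" using weyl_inj[OF w] by (auto dest: injD)
  have sub: "{e\<in>P. left_inv (w \<circ> refl s) e} \<subseteq> {e\<in>P. left_inv w e} - {e0}"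
  proof
    fix e assume "e \<in> {e\<in>P. left_inv (w \<circ> refl s) e}"
    then obtain d where e: "e \<in> P" and d: "d \<in> P" "w (refl s d) = - e" unfolding left_inv_def by auto
    show "e \<in> {e\<in>P. left_inv w e} - {e0}"
    proof (cases "d = s")
      case True
      then have "w (- s) = - e" using d refl_self[OF nz[OF sR]] by simp
      then have "e = w s" using weyl_neg[OF w] by (metis minus_minus)
      then show ?thesis using e n by simp
    next
      case False
      have rd: "refl s d \<in> P" using simple_refl_pos[OF s d(1) False] .
      have "left_inv w e" unfolding left_inv_def using rd d by auto
      moreover have "e \<noteq> e0"
      proof
        assume "e = e0"
        then have "w (refl s d) = w s" using d unfolding e0_def by simp
        then have "refl s d = s" using injw by blast
        then have "d = - s" using refl_refl[OF nz[OF sR]] refl_self[OF nz[OF sR]] by metis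
        then show False using d simple_pos[OF s] not_pos_neg by fastforce
      qed
      ultimately show ?thesis using e by simp
    qed
  qed
  have "left_inv w e0" unfolding left_inv_def e0_def using simple_pos[OF s] by auto
  then have "e0 \<in> {e\<in>P. left_inv w e}" using e0 by simp
  then have "card ({e\<in>P. left_inv w e} - {e0}) < card {e\<in>P. left_inv w e}"
    using finP by (intro card_Diff1_less) auto
  moreover have "card {e\<in>P. left_inv (w \<circ> refl s) e} \<le> card ({e\<in>P. left_inv w e} - {e0})"
    using finP by (intro card_mono[OF _ sub]) auto
  ultimately show ?thesis unfolding n_inv_def by simp
qed

lemma XI_if_simple_pos:
  assumes w: "w \<in> weyl R" and pos: "\<forall>s\<in>I. w s \<in> P"
  shows "w \<in> X"
  unfolding XI_def
proof (intro CollectI conjI w subsetI)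
  fix y assume "y \<in> w ` {b\<in>P. b \<in> span I}"
  then obtain g where "g \<in> P" "g \<in> span I" "y = w g" by auto
  then show "y \<in> P" using weyl_pos_of_support[OF w I_sub pos] coeff_span_I by auto
qed

lemma XI_surj:
  assumes a: "a \<in> long_roots R"
  shows "\<exists>x\<in>X. x h = a"
proof -
  have "h \<bullet> h = a \<bullet> a" "a \<in> R" using a h_long long_iff by auto
  then obtain w0 where "w0 \<in> weyl R" "w0 h = a" using weyl_transitive_same_length[OF hR] by blast
  then obtain w where w: "w \<in> weyl R" "w h = a"
    and min: "\<And>v. v \<in> weyl R \<Longrightarrow> v h = a \<Longrightarrow> n_inv w \<le> n_inv v"
    using ex_has_least_nat[of "\<lambda>v. v \<in> weyl R \<and> v h = a" w0 n_inv] by blast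
  have "\<forall>s\<in>I. w s \<in> P"
  proof (rule ballI, rule ccontr)
    fix s assume s: "s \<in> I" "w s \<notin> P"
    then have sD: "s \<in> D" and sh: "h \<bullet> s = 0" unfolding Itil_def by auto
    have "(w \<circ> refl s) h = a" using refl_orth[OF sh] w by simp
    moreover have "w \<circ> refl s \<in> weyl R" using weyl_comp[OF w(1) weyl_refl] sD DR by auto
    moreover have "n_inv (w \<circ> refl s) < n_inv w" using n_inv_comp_simple_less[OF w(1) sD s(2)] .
    ultimately show False using min by fastforce
  qed
  then show ?thesis using XI_if_simple_pos[OF w(1)] w(2) by blast
qed

lemma xroot_spec:
  assumes a: "a \<in> long_roots R"
  shows "xroot R D h a \<in> X" "xroot R D h a h = a"
proof -
  obtain x where x: "x \<in> X" "x h = a" using XI_surj[OF a] by auto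
  have "xroot R D h a = x" unfolding xroot_def
    using x XI_inj by (intro the_equality) auto
  then show "xroot R D h a \<in> X" "xroot R D h a h = a" using x by auto
qed

lemma xroot_eq: "x \<in> X \<Longrightarrow> xroot R D h (x h) = x"
proof -
  assume x: "x \<in> X"
  have "xroot R D h (x h) \<in> X" "xroot R D h (x h) h = x h" using xroot_spec[OF XI_long[OF x]] by auto
  then show ?thesis using XI_inj x by blast
qed

lemma bij_betw_XI_long_roots: "bij_betw (\<lambda>x. x h) X (long_roots R)"
  unfolding bij_betw_def
proof
  show "inj_on (\<lambda>x. x h) X" using XI_inj by (auto intro: inj_onI)
  show "(\<lambda>x. x h) ` X = long_roots R"
    using XI_long XI_surj by auto
qed

section \<open>Counting along a reflection\<close>

lemma sum_sgn: "finite S \<Longrightarrow> (\<Sum>e\<in>S. sgn (f e)) = real (card {e\<in>S. f e > 0}) - real (card {e\<in>S. f e < 0})"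
proof (induction S rule: finite_induct)
  case empty then show ?case by simp
next
  case (insert x S)
  have a: "{e\<in>insert x S. f e > 0} = (if f x > 0 then insert x {e\<in>S. f e > 0} else {e\<in>S. f e > 0})" by auto
  have b: "{e\<in>insert x S. f e < 0} = (if f x < 0 then insert x {e\<in>S. f e < 0} else {e\<in>S. f e < 0})" by auto
  have fa: "finite {e\<in>S. f e > 0}" "finite {e\<in>S. f e < 0}" using insert by auto
  have na: "x \<notin> {e\<in>S. f e > 0}" "x \<notin> {e\<in>S. f e < 0}" using insert by auto
  show ?case using insert fa na unfolding a b sgn_if by (auto simp: card_insert_if)
qed

lemma root_in_refl_inversions: "g \<in> P \<Longrightarrow> g \<in> refl_inversions g"
  unfolding refl_inversions_def using refl_self[OF nz] PR not_pos_neg by auto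

lemma refl_inversions_inner_pos:
  assumes g: "g \<in> P" and e: "e \<in> refl_inversions g"
  shows "e \<bullet> g > 0"
proof (rule ccontr)
  assume n: "\<not> e \<bullet> g > 0"
  have gR: "g \<in> R" and eP: "e \<in> P" using g e refl_inversions_subset PR by auto
  have p: "pairing e g \<le> 0" unfolding pairing_def using n sq_pos[OF gR] by (simp add: divide_nonpos_pos)
  have "refl g e \<in> P"
  proof -
    have "\<And>a. a \<in> D \<Longrightarrow> coeff D (refl g e) a \<ge> 0"
    proof -
      fix a assume a: "a \<in> D"
      have "coeff D (refl g e) a = coeff D e a - pairing e g * coeff D g a"
        by (simp add: refl_pairing coeff_diff coeff_scale)
      moreover have "coeff D e a \<ge> 0" "coeff D g a \<ge> 0" using eP g a by (auto simp: pos_iff)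
      moreover have "pairing e g * coeff D g a \<le> 0" using p \<open>coeff D g a \<ge> 0\<close> by (simp add: mult_nonpos_nonneg)
      ultimately show "coeff D (refl g e) a \<ge> 0" by simp
    qed
    then show ?thesis using refl_closed[OF gR] eP PR by (auto simp: pos_iff)
  qed
  then show False using e unfolding refl_inversions_def by auto
qed

lemma neg_count_refl_diff:
  assumes g: "g \<in> P" and b: "b \<in> R"
  shows "real (neg_count (refl g b)) - real (neg_count b) = (\<Sum>e\<in>refl_inversions g. sgn (e \<bullet> b))"
proof -
  have gR: "g \<in> R" using g PR by auto
  have "{e\<in>P. e \<bullet> refl g b < 0} = {e\<in>P. refl g e \<bullet> b < 0}"
    using inner_refl_left[OF nz[OF gR]] by metis
  then have "neg_count (refl g b) + card {e\<in>refl_inversions g. e \<bullet> b < 0} = neg_count b + card {e\<in>refl_inversions g. (- e) \<bullet> b < 0}"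
    unfolding neg_count_def using count_refl[OF gR, of "\<lambda>e. e \<bullet> b < 0"] by simp
  moreover have "{e\<in>refl_inversions g. (- e) \<bullet> b < 0} = {e\<in>refl_inversions g. e \<bullet> b > 0}" by auto
  ultimately have "real (neg_count (refl g b)) - real (neg_count b) =
      real (card {e\<in>refl_inversions g. e \<bullet> b > 0}) - real (card {e\<in>refl_inversions g. e \<bullet> b < 0})" by simp
  then show ?thesis using sum_sgn[OF finite_refl_inversions, of "\<lambda>e. e \<bullet> b"] by simp
qed

text \<open>The contribution of the pair \<open>{e, -s\<^sub>g e}\<close> of the inversion set of \<open>s\<^sub>g\<close>
  to \<open>2 (N(s\<^sub>g b) - N(b))\<close>.\<close>
definition pair_sign :: "'v \<Rightarrow> 'v \<Rightarrow> 'v \<Rightarrow> real" where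
  "pair_sign g b e = sgn (e \<bullet> b) - sgn (e \<bullet> refl g b)"

lemma neg_count_refl_diff_pairs:
  assumes g: "g \<in> P" and b: "b \<in> R"
  shows "2 * (real (neg_count (refl g b)) - real (neg_count b)) = (\<Sum>e\<in>refl_inversions g. pair_sign g b e)"
proof -
  have gR: "g \<in> R" using g PR by auto
  have s1: "real (neg_count (refl g b)) - real (neg_count b) = (\<Sum>e\<in>refl_inversions g. sgn (e \<bullet> b))" by (rule neg_count_refl_diff[OF g b])
  have "(\<Sum>e\<in>refl_inversions g. sgn ((- refl g e) \<bullet> b)) = (\<Sum>e\<in>refl_inversions g. sgn (e \<bullet> b))"
    by (rule sum.reindex_bij_betw[OF bij_neg_refl_refl_inversions[OF gR], of "\<lambda>e. sgn (e \<bullet> b)"])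
  moreover have "\<And>e. (- refl g e) \<bullet> b = - (e \<bullet> refl g b)" using inner_refl_left[OF nz[OF gR]] by simp
  ultimately have s2: "real (neg_count (refl g b)) - real (neg_count b) = (\<Sum>e\<in>refl_inversions g. sgn (- (e \<bullet> refl g b)))"
    using s1 by simp
  show ?thesis unfolding pair_sign_def using s1 s2 by (simp add: sum_subtractf sum_negf)
qed

lemma pair_sign_nonneg:
  assumes g: "g \<in> P" and e: "e \<in> refl_inversions g" and gb: "g \<bullet> b > 0"
  shows "pair_sign g b e \<ge> 0" "e \<bullet> b = 0 \<Longrightarrow> pair_sign g b e = 1"
proof -
  have gR: "g \<in> R" using g PR by auto
  have eg: "e \<bullet> g > 0" using refl_inversions_inner_pos[OF g e] .
  have pb: "pairing b g > 0" unfolding pairing_def using gb sq_pos[OF gR] by (simp add: inner_commute)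
  have c: "e \<bullet> refl g b = e \<bullet> b - pairing b g * (e \<bullet> g)"
    by (simp add: refl_pairing inner_diff_right)
  have cp: "pairing b g * (e \<bullet> g) > 0" using pb eg by simp
  show "pair_sign g b e \<ge> 0" unfolding pair_sign_def c sgn_if using cp by auto
  show "e \<bullet> b = 0 \<Longrightarrow> pair_sign g b e = 1" unfolding pair_sign_def c sgn_if using cp by auto
qed

lemma pair_sign_root: "g \<in> R \<Longrightarrow> pair_sign g b g = 2 * sgn (g \<bullet> b)"
proof -
  assume gR: "g \<in> R"
  have "g \<bullet> refl g b = refl g g \<bullet> b" using inner_refl_left[OF nz[OF gR], of g b] by simp
  also have "\<dots> = - (g \<bullet> b)" using refl_self[OF nz[OF gR]] by simp
  finally show ?thesis unfolding pair_sign_def by simp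
qed

lemma sum_pair_sign_remove_root:
  assumes g: "g \<in> P"
  shows "(\<Sum>e\<in>refl_inversions g. pair_sign g b e) = pair_sign g b g + (\<Sum>e\<in>refl_inversions g - {g}. pair_sign g b e)"
  using sum.remove[OF finite_refl_inversions root_in_refl_inversions[OF g]] by simp

lemma neg_count_refl_increase:
  assumes g: "g \<in> P" and b: "b \<in> R" and gb: "g \<bullet> b > 0"
  shows "neg_count (refl g b) \<ge> neg_count b + 1"
proof -
  have gR: "g \<in> R" using g PR by auto
  have "(\<Sum>e\<in>refl_inversions g - {g}. pair_sign g b e) \<ge> 0" using pair_sign_nonneg(1)[OF g _ gb] by (intro sum_nonneg) auto
  moreover have "pair_sign g b g = 2" using pair_sign_root[OF gR] gb by (simp add: sgn_if inner_commute)
  ultimately have "2 * (real (neg_count (refl g b)) - real (neg_count b)) \<ge> 2"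
    using neg_count_refl_diff_pairs[OF g b] sum_pair_sign_remove_root[OF g] by simp
  then show ?thesis by simp
qed

lemma neg_count_refl_decrease:
  assumes g: "g \<in> P" and b: "b \<in> R" and gb: "g \<bullet> b < 0"
  shows "neg_count (refl g b) + 1 \<le> neg_count b"
proof -
  have gR: "g \<in> R" using g PR by auto
  have "g \<bullet> refl g b > 0" using inner_refl_left[OF nz[OF gR], of g b] refl_self[OF nz[OF gR]] gb by simp
  from neg_count_refl_increase[OF g refl_closed[OF gR b] this] show ?thesis using refl_refl[OF nz[OF gR]] by simp
qed

lemma neg_count_edge_exact:
  assumes g: "g \<in> P" and b: "b \<in> R" and eq: "neg_count (refl g b) = neg_count b + 1"
  shows "g \<bullet> b > 0" "\<And>e. e \<in> refl_inversions g - {g} \<Longrightarrow> pair_sign g b e = 0"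
proof -
  have gR: "g \<in> R" using g PR by auto
  show gb: "g \<bullet> b > 0"
  proof (rule ccontr)
    assume n: "\<not> g \<bullet> b > 0"
    show False
    proof (cases "g \<bullet> b = 0")
      case True
      then have "refl g b = b" using refl_orth by (simp add: inner_commute)
      then show False using eq by simp
    next
      case False
      then have "g \<bullet> b < 0" using n by simp
      then show False using neg_count_refl_decrease[OF g b] eq by simp
    qed
  qed
  have t: "pair_sign g b g = 2" using pair_sign_root[OF gR] gb by (simp add: sgn_if)
  have s: "(\<Sum>e\<in>refl_inversions g - {g}. pair_sign g b e) = 0"
    using neg_count_refl_diff_pairs[OF g b] sum_pair_sign_remove_root[OF g] t eq by simp
  have nn: "\<forall>e\<in>refl_inversions g - {g}. pair_sign g b e \<ge> 0" using pair_sign_nonneg(1)[OF g _ gb] by auto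
  have fin: "finite (refl_inversions g - {g})" using finite_refl_inversions by auto
  show "\<And>e. e \<in> refl_inversions g - {g} \<Longrightarrow> pair_sign g b e = 0"
    using sum_nonneg_eq_0_iff[OF fin, of "pair_sign g b"] nn s by auto
qed

section \<open>Edges of long roots and of the Weyl group\<close>

lemma root_edge_iff_neg_count:
  assumes a: "a \<in> long_roots R" and b: "b \<in> long_roots R"
  shows "root_edge R D h b g a \<longleftrightarrow> a = refl g b \<and> neg_count a = neg_count b + 1"
  unfolding root_edge_def using level_eq_neg_count[OF a] level_eq_neg_count[OF b] by auto

lemma edge_to_weyl:
  assumes a: "a \<in> long_roots R" and b: "b \<in> long_roots R" and g: "g \<in> P"
    and e: "root_edge R D h b g a"
  shows "weyl_edge D (xroot R D h b) g (xroot R D h a)"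
proof -
  have gR: "g \<in> R" using g PR by auto
  have bR: "b \<in> R" using b long_iff by auto
  have ab: "a = refl g b" and c: "neg_count a = neg_count b + 1" using e root_edge_iff_neg_count[OF a b] by auto
  have gb: "g \<bullet> b > 0" and t: "\<And>e. e \<in> refl_inversions g - {g} \<Longrightarrow> pair_sign g b e = 0"
    using neg_count_edge_exact[OF g bR] c ab by auto
  define x where "x = xroot R D h b"
  have x: "x \<in> X" "x h = b" unfolding x_def using xroot_spec[OF b] by auto
  have wx: "x \<in> weyl R" using XI_weyl[OF x(1)] .
  define w where "w = refl g \<circ> x"
  have ww: "w \<in> weyl R" unfolding w_def using weyl_step[OF gR wx] .
  have wX: "w \<in> X"
  proof (rule XI_if_simple_pos[OF ww], rule ballI, rule ccontr)
    fix s assume s: "s \<in> I" "w s \<notin> P"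
    have sD: "s \<in> D" "h \<bullet> s = 0" using s unfolding Itil_def by auto
    define d where "d = x s"
    have "d \<in> P" unfolding d_def using XI_pos[OF x(1) simple_pos[OF sD(1)] span_base[OF s(1)]] .
    then have "d \<in> refl_inversions g" using s(2) unfolding refl_inversions_def w_def d_def by simp
    moreover have db: "d \<bullet> b = 0"
      unfolding d_def using weyl_inner[OF wx, of s h] sD(2) x(2) by (simp add: inner_commute)
    moreover have "d \<noteq> g" using db gb by (auto simp: inner_commute)
    ultimately have "pair_sign g b d = 0" "pair_sign g b d = 1"
      using t pair_sign_nonneg(2)[OF g _ gb db] by auto
    then show False by simp
  qed
  have wh: "w h = a" unfolding w_def using x ab by simp
  have "xroot R D h a = w" using xroot_eq[OF wX] wh by simp
  moreover have "wlen D w = wlen D x + 1"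
    using wlen_eq_n_inv[OF ww] wlen_eq_n_inv[OF wx] n_inv_XI[OF wX] n_inv_XI[OF x(1)] wh x(2) c by simp
  ultimately show ?thesis unfolding weyl_edge_def x_def w_def by simp
qed

lemma weyl_to_edge:
  assumes a: "a \<in> long_roots R" and b: "b \<in> long_roots R"
    and e: "weyl_edge D (xroot R D h b) g (xroot R D h a)"
  shows "root_edge R D h b g a"
proof -
  have xa: "xroot R D h a \<in> X" "xroot R D h a h = a" using xroot_spec[OF a] by auto
  have xb: "xroot R D h b \<in> X" "xroot R D h b h = b" using xroot_spec[OF b] by auto
  have eq: "xroot R D h a = refl g \<circ> xroot R D h b" and l: "wlen D (xroot R D h a) = wlen D (xroot R D h b) + 1"
    using e unfolding weyl_edge_def by auto
  have "a = refl g b" using xa(2) xb(2) eq by (metis comp_apply)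
  moreover have "level R D h a = level R D h b + 1"
    using level_XI[OF xa(1)] level_XI[OF xb(1)] xa(2) xb(2) l by simp
  ultimately show ?thesis unfolding root_edge_def by simp
qed

lemma left_inv_refl_iff: "g \<in> P \<Longrightarrow> e \<in> P \<Longrightarrow> left_inv (refl g) e \<longleftrightarrow> e \<in> refl_inversions g"
proof -
  assume g: "g \<in> P" and e: "e \<in> P"
  have gR: "g \<in> R" and eR: "e \<in> R" using g e PR by auto
  have "left_inv (refl g) e \<longleftrightarrow> - refl g e \<in> P"
    unfolding left_inv_def using refl_refl[OF nz[OF gR]] refl_neg
    by (metis minus_minus)
  also have "\<dots> \<longleftrightarrow> refl g e \<notin> P" using neg_iff[OF refl_closed[OF gR eR]] by simp
  finally show ?thesis unfolding refl_inversions_def using e by simp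
qed

lemma simple_if_refl_inversions_singleton:
  assumes g: "g \<in> P" and single: "refl_inversions g = {g}"
  shows "g \<in> D"
proof -
  have gR: "g \<in> R" using g PR by auto
  have "{e\<in>P. left_inv (refl g) e} = refl_inversions g" using left_inv_refl_iff[OF g] refl_inversions_subset by auto
  then have "n_inv (refl g) = 1" unfolding n_inv_def single by simp
  then obtain as where as: "set as \<subseteq> D" "length as = 1" "refl g = refl_prod as"
    using word_of_length_n_inv[OF weyl_refl[OF gR]] by metis
  then obtain s where s: "as = [s]" "s \<in> D" by (cases as) auto
  have sR: "s \<in> R" using s DR by auto
  have "refl g = refl s" using as s by (simp add: o_def)
  then have "refl s g = - g" using refl_self[OF nz[OF gR]] by metis
  then have "g - pairing g s *\<^sub>R s = - g" by (simp add: refl_pairing)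
  then have "2 *\<^sub>R g = pairing g s *\<^sub>R s" by (simp add: algebra_simps scaleR_2)
  then have "g = (pairing g s / 2) *\<^sub>R s" by (metis scaleR_scaleR nonzero_divide_eq_eq scaleR_one
        divide_self_if zero_neq_numeral times_divide_eq_right mult.commute)
  then have "pairing g s / 2 = 1 \<or> pairing g s / 2 = -1" using reduced[OF sR] gR by metis
  then have "g = s \<or> g = - s" using \<open>g = _\<close> by auto
  moreover have "- s \<notin> P" using not_pos_neg simple_pos[OF s(2)] by auto
  ultimately show ?thesis using g s by auto
qed

lemma reduced_mult: "g \<in> R \<Longrightarrow> b \<in> R \<Longrightarrow> c *\<^sub>R g = k *\<^sub>R b \<Longrightarrow> k \<noteq> 0 \<Longrightarrow> c / k = 1 \<or> c / k = -1"
proof -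
  assume g: "g \<in> R" and b: "b \<in> R" and e: "c *\<^sub>R g = k *\<^sub>R b" and k: "k \<noteq> 0"
  have "b = (c / k) *\<^sub>R g" using e k by (metis divide_inverse_commute scaleR_scaleR inverse_eq_divide
        mult.commute right_inverse scaleR_one)
  then show ?thesis using reduced[OF g] b by metis
qed

lemma pairing_pos_long_root:
  assumes b: "b \<in> long_roots R" and g: "g \<in> R" and ne: "g \<noteq> b" "g \<noteq> - b" and gb: "g \<bullet> b > 0"
  shows "pairing b g = (if g \<in> long_roots R then 1 else rr R)"
proof -
  have bR: "b \<in> R" and bl: "b \<bullet> b = sqmax R" using b long_iff by auto
  have ne': "b \<noteq> g" "b \<noteq> - g" using ne by auto
  show ?thesis
  proof (cases "g \<in> long_roots R")
    case True
    then have "b \<bullet> b = g \<bullet> g" using bl long_iff by auto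
    then have "pairing b g \<in> {-1, 0, 1}" using pairing_same_len(2)[OF g bR ne'] by auto
    moreover have "pairing b g > 0" unfolding pairing_def using gb sq_pos[OF g] by (simp add: inner_commute)
    ultimately show ?thesis using True by auto
  next
    case False
    have gg: "g \<bullet> g = sqmin R" using short_root_sq[OF g False] .
    have "pairing g b \<in> {-1, 0, 1}"
      using pairing_short_long[OF bR g ne] sqmin_le[OF bR] gg by auto
    moreover have "pairing g b > 0" unfolding pairing_def using gb sq_pos[OF bR] by simp
    ultimately have "pairing b g * sqmin R = sqmax R"
      using pairing_ratio[OF bR g] gg bl by auto
    then show ?thesis unfolding rr_def using sqmin_pos False by (simp add: field_simps)
  qed
qed

lemma root_edge_refl_self_simple:
  assumes g: "g \<in> P" and gl: "g \<in> long_roots R" and a: "a \<in> long_roots R"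
    and e: "root_edge R D h g g a"
  shows "g \<in> D"
proof -
  have gR: "g \<in> R" using g PR by auto
  have t: "\<And>e. e \<in> refl_inversions g - {g} \<Longrightarrow> pair_sign g g e = 0"
    using neg_count_edge_exact[OF g gR] e root_edge_iff_neg_count[OF a gl] by auto
  have "refl_inversions g = {g}"
  proof (rule ccontr)
    assume "refl_inversions g \<noteq> {g}"
    then obtain e where e: "e \<in> refl_inversions g - {g}" using root_in_refl_inversions[OF g] by blast
    have "e \<bullet> g > 0" using refl_inversions_inner_pos[OF g] e by auto
    moreover have "e \<bullet> refl g g = - (e \<bullet> g)" using refl_self[OF nz[OF gR]] by simp
    ultimately have "pair_sign g g e = 2" unfolding pair_sign_def by simp
    with t[OF e] show False by simp
  qed
  then show ?thesis using simple_if_refl_inversions_singleton[OF g] by simp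
qed

lemma pairing_of_root_edge:
  assumes a: "a \<in> long_roots R" and b: "b \<in> long_roots R" and g: "g \<in> P"
    and e: "root_edge R D h b g a"
  shows "(if b \<in> D \<inter> long_roots R \<and> -a \<in> D \<inter> long_roots R
             then (a = -b \<longrightarrow> pairing b g = 2) \<and> (b + (-a) \<in> R \<longrightarrow> pairing b g = 1)
             else (g \<in> long_roots R \<longrightarrow> pairing b g = 1) \<and>
                  (g \<notin> long_roots R \<longrightarrow> pairing b g = rr R))"
proof -
  have gR: "g \<in> R" using g PR by auto
  have bR: "b \<in> R" using b long_iff by auto
  have ab: "a = refl g b" using e unfolding root_edge_def by simp
  have gb: "g \<bullet> b > 0"
    using neg_count_edge_exact(1)[OF g bR] e root_edge_iff_neg_count[OF a b] by auto
  have pp: "pairing b g > 0" unfolding pairing_def using gb sq_pos[OF gR] by (simp add: inner_commute)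
  show ?thesis
  proof (cases "g = b")
    case True
    then have "b \<in> D" using root_edge_refl_self_simple[OF g _ a] b e by simp
    moreover have am: "a = - b" using ab True refl_self[OF nz[OF gR]] by simp
    moreover have "b + (- a) \<notin> R"
    proof
      assume "b + (- a) \<in> R"
      then have "2 *\<^sub>R b \<in> R" using am by (simp add: scaleR_2)
      then show False using reduced[OF bR] by fastforce
    qed
    moreover have "pairing b g = 2" using True pairing_self[OF nz[OF bR]] by simp
    ultimately show ?thesis using b by auto
  next
    case False
    have gnmb: "g \<noteq> - b"
    proof
      assume "g = - b"
      with gb have "b \<bullet> b < 0" by simp
      then show False using inner_ge_zero[of b] by linarith
    qed
    have "a \<noteq> - b"
    proof
      assume "a = - b"
      then have "2 *\<^sub>R b = pairing b g *\<^sub>R g" using ab by (simp add: refl_pairing algebra_simps scaleR_2)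
      then have "2 / pairing b g = 1 \<or> 2 / pairing b g = -1"
        using reduced_mult[OF bR gR, of 2 "pairing b g"] pp by simp
      then have "pairing b g = 2" using pp by (auto simp: field_simps)
      then show False using \<open>2 *\<^sub>R b = _\<close> False by simp
    qed
    moreover have "b + (- a) \<in> R \<Longrightarrow> pairing b g = 1"
      using ab reduced[OF gR, of "pairing b g"] pp by (fastforce simp: refl_pairing)
    moreover have "pairing b g = (if g \<in> long_roots R then 1 else rr R)"
      using pairing_pos_long_root[OF b gR False gnmb gb] .
    ultimately show ?thesis by auto
  qed
qed

section \<open>Paths of long roots\<close>

definition long_edge where "long_edge b a \<longleftrightarrow> b \<in> long_roots R \<and> a \<in> long_roots R \<and> (\<exists>g\<in>P. root_edge R D h b g a)"

lemma root_le_iff_long_path: "root_le R D h a b \<longleftrightarrow> long_edge\<^sup>*\<^sup>* b a"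
  unfolding root_le_def long_edge_def by (simp add: long_edge_def)

lemma long_edge_iff: "long_edge b a \<longleftrightarrow> b \<in> long_roots R \<and> a \<in> long_roots R \<and> (\<exists>g\<in>P. a = refl g b \<and> neg_count a = neg_count b + 1)"
  unfolding long_edge_def using root_edge_iff_neg_count by blast

lemma refl_long: "g \<in> R \<Longrightarrow> b \<in> long_roots R \<Longrightarrow> refl g b \<in> long_roots R"
  using refl_closed refl_inner[OF nz] long_iff by auto

lemma neg_count_refl_simple_cases:
  assumes s: "s \<in> D"
  shows "s \<bullet> b > 0 \<Longrightarrow> neg_count (refl s b) = neg_count b + 1"
    and "s \<bullet> b < 0 \<Longrightarrow> neg_count (refl s b) + 1 = neg_count b"
    and "s \<bullet> b = 0 \<Longrightarrow> refl s b = b"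
  using neg_count_refl_simple[OF s, of b] unfolding sgn_if
  by (auto simp: refl_orth inner_commute)

lemma long_edge_simple: "s \<in> D \<Longrightarrow> b \<in> long_roots R \<Longrightarrow> s \<bullet> b > 0 \<Longrightarrow> long_edge b (refl s b)"
  unfolding long_edge_iff using neg_count_refl_simple_cases(1) simple_pos DR refl_long by blast

lemma long_edge_simple_neg: "s \<in> D \<Longrightarrow> b \<in> long_roots R \<Longrightarrow> s \<bullet> b < 0 \<Longrightarrow> long_edge (refl s b) b"
proof -
  assume s: "s \<in> D" and b: "b \<in> long_roots R" and n: "s \<bullet> b < 0"
  have sR: "s \<in> R" using s DR by auto
  have "s \<bullet> refl s b > 0" using inner_refl_left[OF nz[OF sR], of s b] refl_self[OF nz[OF sR]] n by simp
  from long_edge_simple[OF s refl_long[OF sR b] this] show ?thesis using refl_refl[OF nz[OF sR]] by simp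
qed

lemma refl_refl_conj: "s \<in> R \<Longrightarrow> refl (refl s g) (refl s x) = refl s (refl g x)"
  by (rule conj_refl[OF linear_refl refl_inner[OF nz]])

lemma long_edge_refl_simple:
  assumes s: "s \<in> D" and g: "g \<in> P" and gs: "g \<noteq> s"
    and e1: "Z2 = refl g Z1" "neg_count Z2 = neg_count Z1 + 1" and l: "Z1 \<in> long_roots R"
    and p1: "s \<bullet> Z1 > 0" and p2: "s \<bullet> Z2 > 0"
  shows "long_edge (refl s Z1) (refl s Z2)"
proof -
  have sR: "s \<in> R" and gR: "g \<in> R" using s g DR PR by auto
  have g': "refl s g \<in> P" using simple_refl_pos[OF s g gs] .
  have "refl s Z2 = refl (refl s g) (refl s Z1)" using e1 refl_refl_conj[OF sR] by simp
  moreover have "neg_count (refl s Z2) = neg_count (refl s Z1) + 1" using neg_count_refl_simple_cases(1)[OF s] p1 p2 e1 by simp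
  moreover have "refl s Z1 \<in> long_roots R" "refl s Z2 \<in> long_roots R"
    using refl_long[OF sR] l refl_long[OF gR] e1 by auto
  ultimately show ?thesis unfolding long_edge_iff using g' by blast
qed

lemma simple_in_refl_inversions:
  assumes s: "s \<in> D" and g: "g \<in> P" and gs: "g \<noteq> s" and sg: "s \<bullet> g > 0"
  shows "s \<in> refl_inversions g"
proof -
  have sR: "s \<in> R" and gR: "g \<in> R" using s g DR PR by auto
  have p: "pairing s g > 0" unfolding pairing_def using sg sq_pos[OF gR] by simp
  have "\<exists>t\<in>D. t \<noteq> s \<and> coeff D g t \<noteq> 0"
  proof (rule ccontr)
    assume "\<not> ?thesis"
    then have "g = coeff D g s *\<^sub>R s"
      by (intro coeff_eq_imp_eq) (auto simp: coeff_scale coeff_simple s)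
    then have "coeff D g s = 1 \<or> coeff D g s = -1" using reduced[OF sR] gR by metis
    moreover have "coeff D g s \<ge> 0" using g s by (auto simp: pos_iff)
    ultimately have "g = s" using \<open>g = _\<close> by auto
    with gs show False by simp
  qed
  then obtain t where t: "t \<in> D" "t \<noteq> s" "coeff D g t \<noteq> 0" by auto
  then have "coeff D g t > 0" using g by (force simp: pos_iff)
  moreover have "coeff D (refl g s) t = - pairing s g * coeff D g t"
    by (simp add: refl_pairing coeff_diff coeff_scale coeff_simple s t)
  ultimately have "coeff D (refl g s) t < 0" using p by (simp add: mult_pos_pos)
  then have "refl g s \<notin> P" using t by (force simp: pos_iff)
  then show ?thesis unfolding refl_inversions_def using simple_pos[OF s] by auto
qed

lemma edge_leaving_simple_half_space:
  assumes s: "s \<in> D" and g: "g \<in> P" and l: "Z1 \<in> R"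
    and e1: "Z2 = refl g Z1" "neg_count Z2 = neg_count Z1 + 1"
    and p1: "s \<bullet> Z1 > 0" and p2: "s \<bullet> Z2 \<le> 0"
  shows "g = s"
proof (rule ccontr)
  assume gs: "g \<noteq> s"
  have gR: "g \<in> R" using g PR by auto
  have gb: "g \<bullet> Z1 > 0" and t: "\<And>e. e \<in> refl_inversions g - {g} \<Longrightarrow> pair_sign g Z1 e = 0"
    using neg_count_edge_exact[OF g l] e1 by auto
  have pp: "pairing Z1 g > 0" unfolding pairing_def using gb sq_pos[OF gR] by (simp add: inner_commute)
  show False
  proof (cases "s \<bullet> g > 0")
    case True
    then have "s \<in> refl_inversions g - {g}" using simple_in_refl_inversions[OF s g gs] gs by auto
    then have "pair_sign g Z1 s = 0" using t by auto
    moreover have "pair_sign g Z1 s \<ge> 1" unfolding pair_sign_def sgn_if using p1 p2 e1 by auto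
    ultimately show False by simp
  next
    case False
    have "s \<bullet> Z2 = s \<bullet> Z1 - pairing Z1 g * (s \<bullet> g)" using e1 by (simp add: refl_pairing inner_diff_right)
    moreover have "pairing Z1 g * (s \<bullet> g) \<le> 0" using False pp by (simp add: mult_nonneg_nonpos)
    ultimately show False using p1 p2 by simp
  qed
qed

definition fold_simple :: "'v \<Rightarrow> 'v \<Rightarrow> 'v" where "fold_simple s Z = (if s \<bullet> Z > 0 then refl s Z else Z)"

lemma fold_simple_edge:
  assumes s: "s \<in> D" and e: "long_edge Z1 Z2"
  shows "long_edge\<^sup>*\<^sup>* (fold_simple s Z1) (fold_simple s Z2)"
proof -
  have sR: "s \<in> R" using s DR by auto
  obtain g where g: "g \<in> P" "Z2 = refl g Z1" "neg_count Z2 = neg_count Z1 + 1" and l: "Z1 \<in> long_roots R" "Z2 \<in> long_roots R"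
    using e unfolding long_edge_iff by auto
  have Z1R: "Z1 \<in> R" using l long_iff by auto
  show ?thesis
  proof (cases "s \<bullet> Z1 > 0")
    case p1: True
    show ?thesis
    proof (cases "s \<bullet> Z2 > 0")
      case True
      have "g \<noteq> s"
      proof
        assume "g = s"
        then have "s \<bullet> Z2 = - (s \<bullet> Z1)" using g(2) inner_refl_left[OF nz[OF sR], of s Z1] refl_self[OF nz[OF sR]]
          by simp
        then show False using p1 True by simp
      qed
      then have "long_edge (refl s Z1) (refl s Z2)" using long_edge_refl_simple[OF s g(1) _ g(2,3) l(1) p1 True] by simp
      then show ?thesis unfolding fold_simple_def using p1 True by auto
    next
      case False
      then have "g = s" using edge_leaving_simple_half_space[OF s g(1) Z1R g(2,3) p1] by simp
      then have "Z2 = refl s Z1" using g by simp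
      moreover have "s \<bullet> refl s Z1 < 0" using inner_refl_left[OF nz[OF sR], of s Z1] refl_self[OF nz[OF sR]] p1 by simp
      ultimately have "fold_simple s Z1 = fold_simple s Z2" unfolding fold_simple_def using p1 by simp
      then show ?thesis by simp
    qed
  next
    case n1: False
    show ?thesis
    proof (cases "s \<bullet> Z2 > 0")
      case True
      have "long_edge Z2 (refl s Z2)" using long_edge_simple[OF s l(2) True] .
      then have "long_edge\<^sup>*\<^sup>* Z1 (refl s Z2)" using e by auto
      then show ?thesis unfolding fold_simple_def using n1 True by simp
    next
      case False
      then show ?thesis unfolding fold_simple_def using n1 e by auto
    qed
  qed
qed

lemma fold_simple_path:
  assumes s: "s \<in> D" and p: "long_edge\<^sup>*\<^sup>* U V"
  shows "long_edge\<^sup>*\<^sup>* (fold_simple s U) (fold_simple s V)"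
  using p
proof (induction rule: rtranclp_induct)
  case base then show ?case by simp
next
  case (step y z)
  then show ?case using fold_simple_edge[OF s step.hyps(2)] by (meson rtranclp_trans)
qed

lemma exists_simple_neg:
  assumes "neg_count a > 0"
  shows "\<exists>s\<in>D. s \<bullet> a < 0"
proof (rule ccontr)
  assume "\<not> ?thesis"
  then have "\<forall>s\<in>D. s \<bullet> a \<ge> 0" by (auto simp: not_less)
  then have "\<And>e. e \<in> P \<Longrightarrow> e \<bullet> a \<ge> 0"
    by (intro nonneg_inner_dom) (auto simp: pos_iff dominant_def)
  then have "{e\<in>P. e \<bullet> a < 0} = {}" by force
  then have "neg_count a = 0" unfolding neg_count_def by (metis card.empty)
  then show False using assms by simp
qed

lemma long_path_unreflect:
  assumes s: "s \<in> D" and b: "b \<in> long_roots R" and a: "a \<in> long_roots R" and sa: "s \<bullet> a < 0"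
    and p: "long_edge\<^sup>*\<^sup>* (refl s b) (refl s a)"
  shows "long_edge\<^sup>*\<^sup>* b a"
proof -
  have sR: "s \<in> R" using s DR by auto
  have sa_a: "long_edge (refl s a) a" using long_edge_simple_neg[OF s a sa] .
  consider "s \<bullet> b > 0" | "s \<bullet> b = 0" | "s \<bullet> b < 0" by fastforce
  then show ?thesis
  proof cases
    case 1
    then have "long_edge b (refl s b)" using long_edge_simple[OF s b] by simp
    then show ?thesis using p sa_a by (meson converse_rtranclp_into_rtranclp rtranclp.rtrancl_into_rtrancl)
  next
    case 2
    then have "refl s b = b" using neg_count_refl_simple_cases(3)[OF s] by simp
    then show ?thesis using p sa_a by (metis rtranclp.rtrancl_into_rtrancl)
  next
    case 3
    have "s \<bullet> refl s b > 0"
      using inner_refl_left[OF nz[OF sR], of s b] refl_self[OF nz[OF sR]] 3 by simp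
    moreover have "s \<bullet> refl s a > 0"
      using inner_refl_left[OF nz[OF sR], of s a] refl_self[OF nz[OF sR]] sa by simp
    ultimately show ?thesis using fold_simple_path[OF s p] refl_refl[OF nz[OF sR]]
      unfolding fold_simple_def by simp
  qed
qed

lemma long_path_refl:
  assumes b: "b \<in> long_roots R" and g: "g \<in> P" and gb: "g \<bullet> b > 0"
  shows "long_edge\<^sup>*\<^sup>* b (refl g b)"
  using b g gb
proof (induction "neg_count (refl g b)" arbitrary: b g rule: less_induct)
  case less
  have gR: "g \<in> R" using less.prems PR by auto
  have bR: "b \<in> R" using less.prems long_iff by auto
  define a where "a = refl g b"
  have al: "a \<in> long_roots R" unfolding a_def using refl_long[OF gR less.prems(1)] .
  have inc: "neg_count a \<ge> neg_count b + 1"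
    unfolding a_def using neg_count_refl_increase[OF less.prems(2) bR less.prems(3)] .
  show ?case
  proof (cases "neg_count a = neg_count b + 1")
    case True
    then have "long_edge b a" unfolding long_edge_iff using less.prems al a_def by blast
    then show ?thesis unfolding a_def by auto
  next
    case False
    then have big: "neg_count a \<ge> neg_count b + 2" using inc by simp
    then obtain s where s: "s \<in> D" "s \<bullet> a < 0" using exists_simple_neg[of a] by auto
    have sR: "s \<in> R" using s DR by auto
    have gs: "g \<noteq> s"
    proof
      assume "g = s"
      then have "neg_count a \<le> neg_count b + 1"
        using neg_count_refl_simple[OF s(1), of b] unfolding a_def sgn_if by (auto split: if_splits)
      then show False using big by simp
    qed
    \<comment> \<open>Conjugating by \<open>s\<close> lowers the level of the target, so the induction applies.\<close>
    define g' where "g' = refl s g"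
    have "refl s a = refl g' (refl s b)" unfolding a_def g'_def using refl_refl_conj[OF sR] by simp
    moreover have "neg_count (refl s a) < neg_count a"
      using neg_count_refl_simple_cases(2)[OF s(1) s(2)] by simp
    moreover have "g' \<in> P" unfolding g'_def using simple_refl_pos[OF s(1) less.prems(2) gs] .
    moreover have "g' \<bullet> refl s b > 0"
      unfolding g'_def using refl_inner[OF nz[OF sR]] less.prems(3) by simp
    ultimately have "long_edge\<^sup>*\<^sup>* (refl s b) (refl s a)"
      using less.hyps[of g' "refl s b"] refl_long[OF sR less.prems(1)] unfolding a_def by simp
    then show ?thesis using long_path_unreflect[OF s(1) less.prems(1) al s(2)] unfolding a_def by simp
  qed
qed

section \<open>Bruhat order\<close>

lemma left_inv_uminus_iff: "left_inv w (- x) \<longleftrightarrow> (\<exists>d\<in>P. w d = x)"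
  unfolding left_inv_def by simp

lemma left_inv_refl_of_left_inv:
  assumes u: "u \<in> weyl R" and g: "g \<in> P" and nq: "\<not> left_inv u g"
    and e: "e \<in> refl_inversions g" and q: "left_inv u e"
  shows "left_inv u (refl g e)"
proof -
  have gR: "g \<in> R" using g PR by auto
  have eR: "e \<in> R" using e refl_inversions_subset PR by auto
  obtain eta where eta: "eta \<in> P" "u eta = g"
    using nq left_inv_neg_iff[OF u gR] left_inv_uminus_iff by blast
  obtain d1 where d1: "d1 \<in> P" "u d1 = - e" using q unfolding left_inv_def by auto
  define d where "d = d1 + pairing e g *\<^sub>R eta"
  have ud: "u d = - refl g e"
    unfolding d_def using d1 eta weyl_linear[OF u] by (simp add: linear_add linear_scale refl_pairing)
  obtain d' where d': "d' \<in> R" "u d' = - refl g e"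
    using weyl_surjR[OF u neg_closed[OF refl_closed[OF gR eR]]] by auto
  have "d = d'" using ud d' weyl_inj[OF u] by (metis injD)
  moreover have "pairing e g > 0"
    unfolding pairing_def using refl_inversions_inner_pos[OF g e] sq_pos[OF gR] by simp
  ultimately have "d \<in> P" using d1 eta d' unfolding d_def by (auto simp: pos_iff coeff_add coeff_scale)
  then show ?thesis unfolding left_inv_def using ud by auto
qed

lemma n_inv_refl_increase:
  assumes u: "u \<in> weyl R" and g: "g \<in> P" and nq: "\<not> left_inv u g"
  shows "n_inv (refl g \<circ> u) \<ge> n_inv u + 1"
proof -
  have gR: "g \<in> R" using g PR by auto
  define A where "A = {e\<in>refl_inversions g. left_inv u e}"
  define B where "B = {e\<in>refl_inversions g. left_inv u (- e)}"
  have count: "n_inv (refl g \<circ> u) + card A = n_inv u + card B"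
    using count_refl[OF gR, of "left_inv u"] n_inv_refl[OF gR] unfolding n_inv_def A_def B_def by simp
  have "(\<lambda>e. - refl g e) ` A \<subseteq> B - {g}"
  proof clarify
    fix e assume eA: "e \<in> A"
    then have e: "e \<in> refl_inversions g" "left_inv u e" unfolding A_def by auto
    have "- refl g e \<in> B"
      using neg_refl_refl_inversions[OF gR e(1)] left_inv_refl_of_left_inv[OF u g nq e]
      unfolding B_def by simp
    moreover have "- refl g e \<noteq> g"
    proof
      assume "- refl g e = g"
      then have "e = g" using refl_refl[OF nz[OF gR], of e] refl_self[OF nz[OF gR]] refl_neg
        by (metis minus_minus)
      then show False using e nq by simp
    qed
    ultimately show "- refl g e \<in> B - {g}" by simp
  qed
  moreover have "inj_on (\<lambda>e. - refl g e) A"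
    by (rule inj_onI) (metis minus_minus refl_refl[OF nz[OF gR]])
  ultimately have "card A \<le> card (B - {g})"
    using finite_refl_inversions unfolding B_def by (intro card_inj_on_le) auto
  moreover have "g \<in> B"
    using root_in_refl_inversions[OF g] nq left_inv_neg_iff[OF u gR] unfolding B_def by simp
  then have "card (B - {g}) < card B"
    using finite_refl_inversions unfolding B_def by (intro card_Diff1_less) auto
  ultimately have "card A + 1 \<le> card B" by simp
  then show ?thesis using count by simp
qed

lemma weyl_edge_not_left_inv:
  assumes u: "u \<in> weyl R" and g: "g \<in> P" and l: "wlen D (refl g \<circ> u) = wlen D u + 1"
  shows "\<not> left_inv u g"
proof
  assume q: "left_inv u g"
  have gR: "g \<in> R" using g PR by auto
  define u' where "u' = refl g \<circ> u"
  have u': "u' \<in> weyl R" unfolding u'_def using weyl_step[OF gR u] .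
  have "\<not> left_inv u' g"
  proof
    assume "left_inv u' g"
    then obtain d where d: "d \<in> P" "refl g (u d) = - g" unfolding left_inv_def u'_def by auto
    then have "u d = g" using refl_refl[OF nz[OF gR]] refl_self[OF nz[OF gR]] refl_neg by metis
    then have "left_inv u (- g)" using d left_inv_uminus_iff by blast
    then show False using q left_inv_neg_iff[OF u gR] by simp
  qed
  then have "n_inv (refl g \<circ> u') \<ge> n_inv u' + 1" using n_inv_refl_increase[OF u' g] by simp
  moreover have "refl g \<circ> u' = u" unfolding u'_def using refl_refl[OF nz[OF gR]] by (simp add: fun_eq_iff)
  ultimately show False using l wlen_eq_n_inv[OF u] wlen_eq_n_inv[OF u'] unfolding u'_def by simp
qed

lemma weyl_edge_long_path:
  assumes u: "u \<in> weyl R" and g: "g \<in> P" and l: "wlen D (refl g \<circ> u) = wlen D u + 1"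
  shows "long_edge\<^sup>*\<^sup>* (u h) ((refl g \<circ> u) h)"
proof -
  have gR: "g \<in> R" using g PR by auto
  have "left_inv u (- g)" using weyl_edge_not_left_inv[OF u g l] left_inv_neg_iff[OF u gR] by simp
  then obtain eta where eta: "eta \<in> P" "u eta = g" using left_inv_uminus_iff by blast
  have "g \<bullet> u h = eta \<bullet> h" using weyl_inner[OF u, of eta h] eta by simp
  then have ge: "g \<bullet> u h \<ge> 0" using pos_inner_h[OF eta(1)] by simp
  have ul: "u h \<in> long_roots R" using weyl_long[OF u h_long] .
  show ?thesis
  proof (cases "g \<bullet> u h = 0")
    case True
    then have "u h \<bullet> g = 0" by (simp add: inner_commute)
    then have "refl g (u h) = u h" by (rule refl_orth)
    then show ?thesis by simp
  next
    case False
    then have "g \<bullet> u h > 0" using ge by simp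
    then show ?thesis using long_path_refl[OF ul g] by simp
  qed
qed

definition bruhat_edge :: "('v \<Rightarrow> 'v) \<Rightarrow> ('v \<Rightarrow> 'v) \<Rightarrow> bool" where
  "bruhat_edge u u' \<longleftrightarrow> (\<exists>g\<in>P. weyl_edge D u g u')"

lemma long_path_of_bruhat_path:
  assumes p: "bruhat_edge\<^sup>*\<^sup>* u v" and u: "u \<in> weyl R"
  shows "v \<in> weyl R \<and> long_edge\<^sup>*\<^sup>* (u h) (v h)"
  using p
proof (induction rule: rtranclp_induct)
  case base then show ?case using u by simp
next
  case (step y z)
  obtain g where g: "g \<in> P" "z = refl g \<circ> y" "wlen D z = wlen D y + 1"
    using step.hyps(2) unfolding bruhat_edge_def weyl_edge_def by auto
  have y: "y \<in> weyl R" "long_edge\<^sup>*\<^sup>* (u h) (y h)" using step.IH by auto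
  have "long_edge\<^sup>*\<^sup>* (y h) (z h)" using weyl_edge_long_path[OF y(1) g(1)] g(2,3) by simp
  moreover have "z \<in> weyl R" using weyl_step[OF _ y(1)] g(1,2) PR by auto
  ultimately show ?case using y(2) by (meson rtranclp_trans)
qed

lemma bruhat_path_of_long_path:
  assumes "long_edge\<^sup>*\<^sup>* b a"
  shows "bruhat_edge\<^sup>*\<^sup>* (xroot R D h b) (xroot R D h a)"
  using assms
proof (induction rule: rtranclp_induct)
  case base then show ?case by simp
next
  case (step y z)
  then obtain g where "g \<in> P" "root_edge R D h y g z" "y \<in> long_roots R" "z \<in> long_roots R"
    unfolding long_edge_def by auto
  then have "bruhat_edge (xroot R D h y) (xroot R D h z)"
    unfolding bruhat_edge_def using edge_to_weyl by blast
  then show ?case using step.IH by simp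
qed

lemma root_le_iff_bruhat_le:
  assumes a: "a \<in> long_roots R" and b: "b \<in> long_roots R"
  shows "root_le R D h a b \<longleftrightarrow> bruhat_le R D h (xroot R D h b) (xroot R D h a)"
proof -
  have "bruhat_le R D h (xroot R D h b) (xroot R D h a) \<longleftrightarrow>
      bruhat_edge\<^sup>*\<^sup>* (xroot R D h b) (xroot R D h a)"
    unfolding bruhat_le_def bruhat_edge_def[abs_def] using xroot_spec(1)[OF a] xroot_spec(1)[OF b] by simp
  also have "\<dots> \<longleftrightarrow> long_edge\<^sup>*\<^sup>* b a"
    using bruhat_path_of_long_path long_path_of_bruhat_path[OF _ XI_weyl[OF xroot_spec(1)[OF b]]]
      xroot_spec(2)[OF a] xroot_spec(2)[OF b] by metis
  finally show ?thesis using root_le_iff_long_path by simp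
qed

lemma root_edge_iff_weyl_edge:
  assumes "a \<in> long_roots R" and "b \<in> long_roots R" and "g \<in> P"
  shows "root_edge R D h b g a \<longleftrightarrow> weyl_edge D (xroot R D h b) g (xroot R D h a)"
  using edge_to_weyl[OF assms] weyl_to_edge[OF assms(1,2)] by blast

end

theorem theorem1p14:
  fixes \<Phi> \<Delta> :: "'v::euclidean_space set" and h :: 'v
  assumes "root_system \<Phi>" and "reduced_rs \<Phi>" and "irreducible_rs \<Phi>"
    and "is_root_basis \<Phi> \<Delta>" and "is_highest_root \<Phi> \<Delta> h"
  shows "bij_betw (\<lambda>x. x h) (XI \<Phi> \<Delta> h) (long_roots \<Phi>)
    \<and> (\<forall>a\<in>long_roots \<Phi>. \<forall>b\<in>long_roots \<Phi>.
          root_le \<Phi> \<Delta> h a b \<longleftrightarrow> bruhat_le \<Phi> \<Delta> h (xroot \<Phi> \<Delta> h b) (xroot \<Phi> \<Delta> h a))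
    \<and> (\<forall>x\<in>XI \<Phi> \<Delta> h. level \<Phi> \<Delta> h (x h) = real (wlen \<Delta> x))
    \<and> (\<forall>a\<in>long_roots \<Phi>. \<forall>b\<in>long_roots \<Phi>. \<forall>g\<in>pos_roots \<Phi> \<Delta>.
          root_edge \<Phi> \<Delta> h b g a \<longleftrightarrow> weyl_edge \<Delta> (xroot \<Phi> \<Delta> h b) g (xroot \<Phi> \<Delta> h a))
    \<and> (\<forall>a\<in>long_roots \<Phi>. \<forall>b\<in>long_roots \<Phi>. \<forall>g\<in>pos_roots \<Phi> \<Delta>.
          root_edge \<Phi> \<Delta> h b g a \<longrightarrow>
            (if b \<in> \<Delta> \<inter> long_roots \<Phi> \<and> -a \<in> \<Delta> \<inter> long_roots \<Phi>
             then (a = -b \<longrightarrow> pairing b g = 2) \<and> (b + (-a) \<in> \<Phi> \<longrightarrow> pairing b g = 1)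
             else (g \<in> long_roots \<Phi> \<longrightarrow> pairing b g = 1) \<and>
                  (g \<notin> long_roots \<Phi> \<longrightarrow> pairing b g = rr \<Phi>)))"
proof -
  interpret irreducible_root_system \<Phi> \<Delta> h using assms by unfold_locales
  show ?thesis
    by (intro conjI ballI impI bij_betw_XI_long_roots root_le_iff_bruhat_le level_XI
        root_edge_iff_weyl_edge pairing_of_root_edge)
qed

end
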